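(* Let $\mathcal{S},\mathcal{A}$ be finite, $\gamma\in(0,1)$, $\alpha\in(0,1)$, and let $\pi$ be a fixed stochastic policy. For each $(s,a)$, $(\tilde r(s,a),\tilde s')\sim P(\cdot,\cdot\mid s,a)$ with $\tilde r(s,a)\in[0,1]$ almost surely and $\tilde r(s,a)$ having a bounded density. Consider the iteration: at each step $t$, for each $(s,a)$ a sample $(r,s')$ is drawn from $P(\cdot,\cdot\mid s,a)$, conditionally independently of the past given $(s,a)$, and $$Q_{t+1}(s,a)=Q_t(s,a)+2\zeta_t(s,a)\big[(1-\alpha)\big(r+\gamma V_t(s')-Q_t(s,a)\big)_-+\alpha\big(r+\gamma V_t(s')-Q_t(s,a)\big)_+\big],$$ where $V_t(s')=\sum_{a'}\pi(a'\mid s')Q_t(s',a')$, and the nonnegative (possibly history-dependent) learning rates satisfy $\sum_{t=0}^\infty\zeta_t(s,a)=\infty$ and $\sum_{t=0}^\infty\zeta_t(s,a)^2<\infty$ for all $(s,a)$ (components not updated at step $t$ have $\zeta_t(s,a)=0$). Then $Q_t(s,a)\to Q^\pi(s,a)$ almost surely for all $(s,a)$, where $Q^\pi$ is the dynamic-expectile action-value function of $\pi$.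
   Context: $(x)_-:=\min(x,0)$, $(x)_+:=\max(x,0)$. The $\alpha$-expectile of a random variable $\tilde x$ is $\mathrm{Expectile}_\alpha[\tilde x]=\arg\min_{y\in\mathbb{R}}(1-\alpha)\mathbb{E}[(\tilde x-y)_-^2]+\alpha\mathbb{E}[(\tilde x-y)_+^2]$. With $\rho=\mathrm{Expectile}_\alpha$, the Bellman operator of $\pi$ is $(\mathcal{T}^\pi Q)(s,a)=\rho\big(\tilde r(s,a)+\gamma\sum_{a'}\pi(a'\mid\tilde s')Q(\tilde s',a')\big)$, $\rho$ taken over the joint law of $(\tilde r(s,a),\tilde s')$, and $Q^\pi$ is its unique fixed point. *)

theory Defs
  imports "HOL-Probability.Probability"
begin

definition negpart :: "real \<Rightarrow> real" where "negpart x = min x 0"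
definition pospart :: "real \<Rightarrow> real" where "pospart x = max x 0"

definition expectile_loss :: "real \<Rightarrow> real measure \<Rightarrow> real \<Rightarrow> real" where
  "expectile_loss \<alpha> \<mu> y =
     (1 - \<alpha>) * (\<integral>x. (negpart (x - y))\<^sup>2 \<partial>\<mu>) + \<alpha> * (\<integral>x. (pospart (x - y))\<^sup>2 \<partial>\<mu>)"

definition expectile :: "real \<Rightarrow> real measure \<Rightarrow> real" where
  "expectile \<alpha> \<mu> = (SOME y. \<forall>z. expectile_loss \<alpha> \<mu> y \<le> expectile_loss \<alpha> \<mu> z)"

definition Vpol :: "('s::finite \<Rightarrow> 'a::finite \<Rightarrow> real) \<Rightarrow> ('s \<Rightarrow> 'a \<Rightarrow> real) \<Rightarrow> 's \<Rightarrow> real" where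
  "Vpol \<pi> Q s = (\<Sum>a'\<in>UNIV. \<pi> s a' * Q s a')"

definition bellman_exp ::
  "real \<Rightarrow> real \<Rightarrow> ('s::finite \<Rightarrow> 'a::finite \<Rightarrow> (real \<times> 's) measure)
   \<Rightarrow> ('s \<Rightarrow> 'a \<Rightarrow> real) \<Rightarrow> ('s \<Rightarrow> 'a \<Rightarrow> real) \<Rightarrow> ('s \<Rightarrow> 'a \<Rightarrow> real)" where
  "bellman_exp \<alpha> \<gamma> P \<pi> Q = (\<lambda>s a.
     expectile \<alpha> (distr (P s a) borel (\<lambda>(r, s'). r + \<gamma> * Vpol \<pi> Q s')))"

definition Qpi ::
  "real \<Rightarrow> real \<Rightarrow> ('s::finite \<Rightarrow> 'a::finite \<Rightarrow> (real \<times> 's) measure)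
   \<Rightarrow> ('s \<Rightarrow> 'a \<Rightarrow> real) \<Rightarrow> ('s \<Rightarrow> 'a \<Rightarrow> real)" where
  "Qpi \<alpha> \<gamma> P \<pi> = (THE Q. bellman_exp \<alpha> \<gamma> P \<pi> Q = Q)"

end

theory Submission
  imports Defs
begin

text \<open>The expectile of a bounded law is the unique root of the strictly decreasing score
  \<open>q \<mapsto> E[(1 - \<alpha>) (X - q)\<^sub>- + \<alpha> (X - q)\<^sub>+]\<close>, whose slopes lie between \<open>min \<alpha> (1 - \<alpha>)\<close> and
  \<open>max \<alpha> (1 - \<alpha>)\<close>. Hence the expectile Bellman operator is monotone and shifts by \<open>\<gamma> c\<close> when
  the next-state values shift by \<open>c\<close>, i.e. it is a \<open>\<gamma>\<close>-contraction in the sup norm, and \<open>Q\<^sup>\<pi>\<close>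
  exists. The update reads \<open>Q\<^sub>t\<^sub>+\<^sub>1 = Q\<^sub>t + 2 \<zeta>\<^sub>t (h\<^sub>t + W\<^sub>t)\<close>, where \<open>h\<^sub>t\<close> is the mean score at
  \<open>Q\<^sub>t\<close>, a gain in \<open>[min \<alpha> (1 - \<alpha>), max \<alpha> (1 - \<alpha>)]\<close> times \<open>bellman Q\<^sub>t - Q\<^sub>t\<close>, and \<open>W\<^sub>t\<close> is a
  martingale difference. After localising to paths on which \<open>Q\<close> and \<open>\<Sum> \<zeta>\<^sup>2\<close> stay below a
  level \<open>K\<close>, Kolmogorov's maximal inequality makes \<open>\<Sum> \<zeta>\<^sub>t W\<^sub>t\<close> converge almost surely. The
  iterates are bounded pathwise, and on each such path a deterministic argument shows that
  \<open>\<parallel>Q\<^sub>t - Q\<^sup>\<pi>\<parallel> \<le> D\<close> eventually implies \<open>\<parallel>Q\<^sub>t - Q\<^sup>\<pi>\<parallel> \<le> \<gamma> D + 3 \<delta>\<close> eventually; iterating gives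
  \<open>Q\<^sub>t \<longrightarrow> Q\<^sup>\<pi>\<close>.\<close>

section \<open>Asymmetric losses and the expectile\<close>

definition asym_lin :: "real \<Rightarrow> real \<Rightarrow> real" where
  "asym_lin \<alpha> u = (1 - \<alpha>) * negpart u + \<alpha> * pospart u"

definition asym_sq :: "real \<Rightarrow> real \<Rightarrow> real" where
  "asym_sq \<alpha> u = (1 - \<alpha>) * (negpart u)\<^sup>2 + \<alpha> * (pospart u)\<^sup>2"

lemma asym_lin_measurable [measurable]: "asym_lin \<alpha> \<in> borel_measurable borel"
  unfolding asym_lin_def negpart_def pospart_def by measurable

lemma asym_sq_measurable [measurable]: "asym_sq \<alpha> \<in> borel_measurable borel"
  unfolding asym_sq_def negpart_def pospart_def by measurable

lemma asym_lin_eq_scaled: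
  assumes "0 \<le> \<alpha>" "\<alpha> \<le> 1"
  obtains c where "0 \<le> c" "c \<le> 1" "asym_lin \<alpha> u = c * u"
proof (cases "0 \<le> u")
  case True
  then show ?thesis using assms by (intro that[of \<alpha>]) (auto simp: asym_lin_def negpart_def pospart_def)
next
  case False
  then show ?thesis using assms by (intro that[of "1 - \<alpha>"]) (auto simp: asym_lin_def negpart_def pospart_def)
qed

lemma abs_asym_lin_le: "0 \<le> \<alpha> \<Longrightarrow> \<alpha> \<le> 1 \<Longrightarrow> \<bar>asym_lin \<alpha> u\<bar> \<le> \<bar>u\<bar>"
  by (rule asym_lin_eq_scaled[of \<alpha> u]) (auto simp: abs_mult mult_left_le_one_le)

lemma asym_lin_nonneg: "0 \<le> \<alpha> \<Longrightarrow> 0 \<le> u \<Longrightarrow> 0 \<le> asym_lin \<alpha> u"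
  by (auto simp: asym_lin_def negpart_def pospart_def)

lemma asym_lin_nonpos: "\<alpha> \<le> 1 \<Longrightarrow> u \<le> 0 \<Longrightarrow> asym_lin \<alpha> u \<le> 0"
  by (auto simp: asym_lin_def negpart_def pospart_def mult_nonneg_nonpos)

lemma asym_lin_slope_bounds:
  assumes "v \<le> u"
  shows "min \<alpha> (1 - \<alpha>) * (u - v) \<le> asym_lin \<alpha> u - asym_lin \<alpha> v"
    and "asym_lin \<alpha> u - asym_lin \<alpha> v \<le> max \<alpha> (1 - \<alpha>) * (u - v)"
proof -
  have "min \<alpha> (1 - \<alpha>) * (u - v) \<le> asym_lin \<alpha> u - asym_lin \<alpha> v
      \<and> asym_lin \<alpha> u - asym_lin \<alpha> v \<le> max \<alpha> (1 - \<alpha>) * (u - v)"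
  proof (cases "0 \<le> v \<or> u < 0")
    case True
    then have "asym_lin \<alpha> u - asym_lin \<alpha> v = (if 0 \<le> v then \<alpha> else 1 - \<alpha>) * (u - v)"
      using assms by (auto simp: asym_lin_def negpart_def pospart_def algebra_simps)
    then show ?thesis using assms by (auto intro: mult_right_mono)
  next
    case False
    then have "asym_lin \<alpha> u - asym_lin \<alpha> v = \<alpha> * u + (1 - \<alpha>) * (- v)" "0 \<le> u" "0 \<le> - v"
      by (auto simp: asym_lin_def negpart_def pospart_def)
    moreover have "min \<alpha> (1 - \<alpha>) * x \<le> \<alpha> * x" "min \<alpha> (1 - \<alpha>) * x \<le> (1 - \<alpha>) * x"
      "\<alpha> * x \<le> max \<alpha> (1 - \<alpha>) * x" "(1 - \<alpha>) * x \<le> max \<alpha> (1 - \<alpha>) * x" if "0 \<le> x" for x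
      using that by (auto intro: mult_right_mono)
    ultimately show ?thesis by (smt (verit, best) right_diff_distrib)
  qed
  then show "min \<alpha> (1 - \<alpha>) * (u - v) \<le> asym_lin \<alpha> u - asym_lin \<alpha> v"
    and "asym_lin \<alpha> u - asym_lin \<alpha> v \<le> max \<alpha> (1 - \<alpha>) * (u - v)" by auto
qed

lemma asym_lin_mono: "0 \<le> \<alpha> \<Longrightarrow> \<alpha> \<le> 1 \<Longrightarrow> v \<le> u \<Longrightarrow> asym_lin \<alpha> v \<le> asym_lin \<alpha> u"
  using asym_lin_slope_bounds(1)[of v u \<alpha>] by (smt (verit) mult_nonneg_nonneg)

lemma abs_asym_sq_le: "0 \<le> \<alpha> \<Longrightarrow> \<alpha> \<le> 1 \<Longrightarrow> \<bar>asym_sq \<alpha> u\<bar> \<le> u\<^sup>2"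
  by (cases "0 \<le> u") (auto simp: asym_sq_def negpart_def pospart_def abs_mult mult_left_le_one_le)

text \<open>Since \<open>asym_lin\<close> is half the derivative of \<open>asym_sq\<close>, this is strong convexity of
  \<open>asym_sq\<close> with modulus \<open>min \<alpha> (1 - \<alpha>)\<close>.\<close>
lemma asym_sq_strongly_convex:
  shows "asym_sq \<alpha> u + 2 * asym_lin \<alpha> u * d + min \<alpha> (1 - \<alpha>) * d\<^sup>2 \<le> asym_sq \<alpha> (u + d)"
proof -
  define m where "m = min \<alpha> (1 - \<alpha>)"
  define v where "v = u + d"
  have m: "m \<le> \<alpha>" "m \<le> 1 - \<alpha>" by (auto simp: m_def)
  consider "0 \<le> u" "0 \<le> v" | "0 \<le> u" "v < 0" | "u < 0" "0 \<le> v" | "u < 0" "v < 0"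
    by linarith
  then have "asym_sq \<alpha> u + 2 * asym_lin \<alpha> u * d + m * d\<^sup>2 \<le> asym_sq \<alpha> v"
  proof cases
    case 1
    then have "asym_sq \<alpha> v - (asym_sq \<alpha> u + 2 * asym_lin \<alpha> u * d + m * d\<^sup>2) = (\<alpha> - m) * d\<^sup>2"
      by (simp add: v_def asym_sq_def asym_lin_def negpart_def pospart_def power2_eq_square algebra_simps)
    then show ?thesis using m by (smt (verit) mult_nonneg_nonneg zero_le_power2)
  next
    case 2
    then have "asym_sq \<alpha> v - (asym_sq \<alpha> u + 2 * asym_lin \<alpha> u * d + m * d\<^sup>2)
        = (1 - \<alpha> - m) * v\<^sup>2 + (\<alpha> - m) * u\<^sup>2 + 2 * (\<alpha> - m) * (u * (- v))"
      by (simp add: v_def asym_sq_def asym_lin_def negpart_def pospart_def power2_eq_square algebra_simps)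
    moreover have "0 \<le> u * (- v)" using 2 by (simp add: mult_nonneg_nonpos)
    ultimately show ?thesis using m by (smt (verit) mult_nonneg_nonneg zero_le_power2)
  next
    case 3
    then have "asym_sq \<alpha> v - (asym_sq \<alpha> u + 2 * asym_lin \<alpha> u * d + m * d\<^sup>2)
        = (\<alpha> - m) * v\<^sup>2 + (1 - \<alpha> - m) * u\<^sup>2 + 2 * (1 - \<alpha> - m) * ((- u) * v)"
      by (simp add: v_def asym_sq_def asym_lin_def negpart_def pospart_def power2_eq_square algebra_simps)
    moreover have "0 \<le> (- u) * v" using 3 by (intro mult_nonneg_nonneg) auto
    ultimately show ?thesis using m by (smt (verit) mult_nonneg_nonneg zero_le_power2)
  next
    case 4
    then have "asym_sq \<alpha> v - (asym_sq \<alpha> u + 2 * asym_lin \<alpha> u * d + m * d\<^sup>2) = (1 - \<alpha> - m) * d\<^sup>2"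
      by (simp add: v_def asym_sq_def asym_lin_def negpart_def pospart_def power2_eq_square algebra_simps)
    then show ?thesis using m by (smt (verit) mult_nonneg_nonneg zero_le_power2)
  qed
  then show ?thesis by (simp add: m_def v_def)
qed

locale expectile_bounded_law = prob_space \<mu> for \<mu> :: "real measure" +
  fixes K \<alpha> :: real
  assumes sets_eq_borel: "sets \<mu> = sets borel"
    and AE_abs_le: "AE x in \<mu>. \<bar>x\<bar> \<le> K"
    and alpha: "0 < \<alpha>" "\<alpha> < 1"
begin

lemma alpha_unit: "0 \<le> \<alpha>" "\<alpha> \<le> 1"
  using alpha by simp_all

lemma integrable_bounded_on_support:
  fixes C :: real
  assumes "f \<in> borel_measurable borel" "\<And>x. \<bar>x\<bar> \<le> K \<Longrightarrow> \<bar>f x\<bar> \<le> C"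
  shows "integrable \<mu> f"
proof (rule integrable_const_bound[where B = C])
  show "AE x in \<mu>. norm (f x) \<le> C" using AE_abs_le by eventually_elim (use assms in auto)
  show "f \<in> borel_measurable \<mu>" using assms(1) by (simp add: measurable_cong_sets[OF sets_eq_borel refl])
qed

lemma integrable_asym_lin: "integrable \<mu> (\<lambda>x. asym_lin \<alpha> (x - q))"
proof (rule integrable_bounded_on_support[where C = "K + \<bar>q\<bar>"])
  fix x :: real assume "\<bar>x\<bar> \<le> K"
  then show "\<bar>asym_lin \<alpha> (x - q)\<bar> \<le> K + \<bar>q\<bar>" using abs_asym_lin_le[OF alpha_unit, of "x - q"] by linarith
qed simp

lemma integrable_asym_sq: "integrable \<mu> (\<lambda>x. asym_sq \<alpha> (x - q))"
proof (rule integrable_bounded_on_support[where C = "(K + \<bar>q\<bar>)\<^sup>2"])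
  fix x :: real assume "\<bar>x\<bar> \<le> K"
  then have "(x - q)\<^sup>2 \<le> (K + \<bar>q\<bar>)\<^sup>2" by (simp add: abs_le_square_iff[symmetric])
  then show "\<bar>asym_sq \<alpha> (x - q)\<bar> \<le> (K + \<bar>q\<bar>)\<^sup>2" using abs_asym_sq_le[OF alpha_unit, of "x - q"] by linarith
qed simp

text \<open>The first-order condition of the expectile loss: \<open>score\<close> is minus half its derivative.\<close>
definition score :: "real \<Rightarrow> real" where
  "score q = (\<integral>x. asym_lin \<alpha> (x - q) \<partial>\<mu>)"

lemma score_slope_bounds:
  assumes "p \<le> q"
  shows "min \<alpha> (1 - \<alpha>) * (q - p) \<le> score p - score q"
    and "score p - score q \<le> max \<alpha> (1 - \<alpha>) * (q - p)"
proof -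
  have diff: "score p - score q = (\<integral>x. asym_lin \<alpha> (x - p) - asym_lin \<alpha> (x - q) \<partial>\<mu>)"
    unfolding score_def by (rule Bochner_Integration.integral_diff[symmetric]) (fact integrable_asym_lin)+
  have "(\<integral>x. min \<alpha> (1 - \<alpha>) * (q - p) \<partial>\<mu>) \<le> (\<integral>x. asym_lin \<alpha> (x - p) - asym_lin \<alpha> (x - q) \<partial>\<mu>)"
  proof (rule integral_mono)
    fix x show "min \<alpha> (1 - \<alpha>) * (q - p) \<le> asym_lin \<alpha> (x - p) - asym_lin \<alpha> (x - q)"
      using asym_lin_slope_bounds(1)[of "x - q" "x - p"] assms by simp
  qed (use integrable_asym_lin in auto)
  then show "min \<alpha> (1 - \<alpha>) * (q - p) \<le> score p - score q" by (simp add: diff prob_space)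
  have "(\<integral>x. asym_lin \<alpha> (x - p) - asym_lin \<alpha> (x - q) \<partial>\<mu>) \<le> (\<integral>x. max \<alpha> (1 - \<alpha>) * (q - p) \<partial>\<mu>)"
  proof (rule integral_mono)
    fix x show "asym_lin \<alpha> (x - p) - asym_lin \<alpha> (x - q) \<le> max \<alpha> (1 - \<alpha>) * (q - p)"
      using asym_lin_slope_bounds(2)[of "x - q" "x - p"] assms by simp
  qed (use integrable_asym_lin in auto)
  then show "score p - score q \<le> max \<alpha> (1 - \<alpha>) * (q - p)" by (simp add: diff prob_space)
qed

lemma score_strict_antimono: "p < q \<Longrightarrow> score q < score p"
  using score_slope_bounds(1)[of p q] alpha by (smt (verit) mult_pos_pos)

lemma abs_score_diff_le: "\<bar>score p - score q\<bar> \<le> \<bar>p - q\<bar>"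
proof -
  have "\<bar>score p - score q\<bar> \<le> max \<alpha> (1 - \<alpha>) * \<bar>p - q\<bar>"
  proof (cases "p \<le> q")
    case True
    then show ?thesis using score_slope_bounds[OF True] alpha
      by (smt (verit, best) mult_nonneg_nonneg)
  next
    case False
    then show ?thesis using score_slope_bounds[of q p] alpha
      by (smt (verit, best) mult_nonneg_nonneg)
  qed
  also have "\<dots> \<le> \<bar>p - q\<bar>" using alpha by (intro mult_left_le_one_le) auto
  finally show ?thesis .
qed

lemma score_has_root: "\<exists>y. score y = 0"
proof -
  have "0 \<le> score (- K)" unfolding score_def
    using AE_abs_le by (intro integral_nonneg_AE) (auto elim!: eventually_mono intro: asym_lin_nonneg[OF alpha_unit(1)])
  moreover have "0 \<le> - score K" unfolding score_def integral_minus[symmetric]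
    using AE_abs_le by (intro integral_nonneg_AE) (auto elim!: eventually_mono intro: asym_lin_nonpos[OF alpha_unit(2)])
  moreover have "continuous_on {- K..K} score"
    by (rule lipschitz_on_continuous_on[where L = 1], rule lipschitz_onI)
      (auto simp: dist_real_def abs_score_diff_le)
  ultimately show ?thesis
    using IVT2'[of score K 0 "- K"] score_strict_antimono[of K "- K"] by force
qed

lemma expectile_loss_eq_integral: "expectile_loss \<alpha> \<mu> z = (\<integral>x. asym_sq \<alpha> (x - z) \<partial>\<mu>)"
proof -
  have "integrable \<mu> (\<lambda>x. (negpart (x - z))\<^sup>2)" "integrable \<mu> (\<lambda>x. (pospart (x - z))\<^sup>2)"
    by (auto intro!: integrable_bounded_on_support[where C = "(K + \<bar>z\<bar>)\<^sup>2"]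
        simp: negpart_def pospart_def abs_le_square_iff[symmetric])
  then show ?thesis unfolding expectile_loss_def asym_sq_def by simp
qed

lemma expectile_loss_quadratic_growth:
  assumes "score y = 0"
  shows "expectile_loss \<alpha> \<mu> y + min \<alpha> (1 - \<alpha>) * (y - z)\<^sup>2 \<le> expectile_loss \<alpha> \<mu> z"
proof -
  let ?m = "min \<alpha> (1 - \<alpha>) * (y - z)\<^sup>2"
  have "(\<integral>x. asym_sq \<alpha> (x - y) + 2 * (y - z) * asym_lin \<alpha> (x - y) + ?m \<partial>\<mu>)
      \<le> (\<integral>x. asym_sq \<alpha> (x - z) \<partial>\<mu>)"
  proof (rule integral_mono)
    fix x show "asym_sq \<alpha> (x - y) + 2 * (y - z) * asym_lin \<alpha> (x - y) + ?m \<le> asym_sq \<alpha> (x - z)"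
      using asym_sq_strongly_convex[of \<alpha> "x - y" "y - z"] by (simp add: algebra_simps)
  qed (use integrable_asym_sq integrable_asym_lin in auto)
  moreover have "(\<integral>x. asym_sq \<alpha> (x - y) + 2 * (y - z) * asym_lin \<alpha> (x - y) + ?m \<partial>\<mu>)
      = (\<integral>x. asym_sq \<alpha> (x - y) \<partial>\<mu>) + 2 * (y - z) * score y + ?m"
    using integrable_asym_sq integrable_asym_lin by (simp add: score_def prob_space)
  ultimately show ?thesis using assms by (simp add: expectile_loss_eq_integral)
qed

lemma score_expectile_eq_0: "score (expectile \<alpha> \<mu>) = 0"
proof -
  obtain y where y: "score y = 0" using score_has_root by blast
  have m: "0 < min \<alpha> (1 - \<alpha>)" using alpha by simp
  have "expectile \<alpha> \<mu> = y" unfolding expectile_def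
  proof (rule some_equality)
    show "\<forall>z. expectile_loss \<alpha> \<mu> y \<le> expectile_loss \<alpha> \<mu> z"
      using expectile_loss_quadratic_growth[OF y] m by (smt (verit) mult_nonneg_nonneg zero_le_power2)
    fix y' assume "\<forall>z. expectile_loss \<alpha> \<mu> y' \<le> expectile_loss \<alpha> \<mu> z"
    then have "min \<alpha> (1 - \<alpha>) * (y - y')\<^sup>2 \<le> 0"
      using expectile_loss_quadratic_growth[OF y, of y'] by (smt (verit))
    then show "y' = y" using m by (simp add: mult_le_0_iff)
  qed
  then show ?thesis using y by simp
qed

end

section \<open>The expectile Bellman operator\<close>

definition supnorm :: "('s::finite \<Rightarrow> 'a::finite \<Rightarrow> real) \<Rightarrow> real" where
  "supnorm Q = Max (range (\<lambda>(s, a). \<bar>Q s a\<bar>))"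

lemma abs_le_supnorm: "\<bar>Q s a\<bar> \<le> supnorm Q"
  unfolding supnorm_def by (rule Max_ge) (auto intro!: image_eqI[where x = "(s, a)"])

lemma supnorm_le: "(\<And>s a. \<bar>Q s a\<bar> \<le> c) \<Longrightarrow> supnorm Q \<le> c"
  unfolding supnorm_def by (subst Max_le_iff) auto

lemma supnorm_le_iff: "supnorm Q \<le> c \<longleftrightarrow> (\<forall>s a. \<bar>Q s a\<bar> \<le> c)"
  using abs_le_supnorm supnorm_le order_trans by blast

lemma supnorm_nonneg: "0 \<le> supnorm Q"
  using abs_le_supnorm[of Q] abs_ge_zero by (meson order_trans)

lemma supnorm_diff_commute: "supnorm (\<lambda>s a. Q s a - Q' s a) = supnorm (\<lambda>s a. Q' s a - Q s a)"
  unfolding supnorm_def by (simp add: abs_minus_commute)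

lemma supnorm_tendsto_zero:
  assumes "\<And>s a. (\<lambda>n. X n s a) \<longlonglongrightarrow> 0"
  shows "(\<lambda>n. supnorm (X n)) \<longlonglongrightarrow> 0"
proof (rule tendstoI)
  fix r :: real assume "0 < r"
  then have "eventually (\<lambda>n. \<bar>X n s a\<bar> < r / 2) sequentially" for s a
    using tendstoD[OF assms[of s a], of "r / 2"] by (simp add: dist_real_def)
  then have "eventually (\<lambda>n. \<forall>s a. \<bar>X n s a\<bar> < r / 2) sequentially"
    by (intro eventually_all_finite) simp
  then show "eventually (\<lambda>n. dist (supnorm (X n)) 0 < r) sequentially"
  proof eventually_elim
    case (elim n)
    then have "supnorm (X n) \<le> r / 2" by (intro supnorm_le) (simp add: less_imp_le)
    then show ?case using \<open>0 < r\<close> supnorm_nonneg[of "X n"] by simp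
  qed
qed

lemma tendsto_of_summable_increments:
  fixes x :: "nat \<Rightarrow> real"
  assumes "summable (\<lambda>n. x (Suc n) - x n)"
  shows "x \<longlonglongrightarrow> x 0 + (\<Sum>n. x (Suc n) - x n)"
proof -
  have "(\<lambda>n. x 0 + (\<Sum>i<n. x (Suc i) - x i)) \<longlonglongrightarrow> x 0 + (\<Sum>n. x (Suc n) - x n)"
    by (intro tendsto_add tendsto_const summable_LIMSEQ assms)
  then show ?thesis by (simp add: sum_lessThan_telescope)
qed

lemma supnorm_contraction_fixpoint_unique:
  assumes "c < 1"
    and contr: "\<And>Q Q' s a. \<bar>f Q s a - f Q' s a\<bar> \<le> c * supnorm (\<lambda>s a. Q s a - Q' s a)"
    and "f Q = Q" "f Q' = Q'"
  shows "Q = Q'"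
proof -
  let ?d = "supnorm (\<lambda>s a. Q s a - Q' s a)"
  have "?d \<le> c * ?d" using contr[of Q _ _ Q'] assms(3,4) by (intro supnorm_le) simp
  then have "(1 - c) * ?d \<le> 0" by (simp add: algebra_simps)
  then have "?d \<le> 0" using \<open>c < 1\<close> by (simp add: mult_le_0_iff)
  then have "Q s a = Q' s a" for s a using abs_le_supnorm[of "\<lambda>s a. Q s a - Q' s a" s a] by simp
  then show ?thesis by (simp add: fun_eq_iff)
qed

lemma supnorm_contraction_has_fixpoint:
  fixes f :: "('s::finite \<Rightarrow> 'a::finite \<Rightarrow> real) \<Rightarrow> 's \<Rightarrow> 'a \<Rightarrow> real"
  assumes "0 \<le> c" "c < 1"
    and contr: "\<And>Q Q' s a. \<bar>f Q s a - f Q' s a\<bar> \<le> c * supnorm (\<lambda>s a. Q s a - Q' s a)"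
  shows "\<exists>Q. f Q = Q"
proof -
  define x where "x n = (f ^^ n) (\<lambda>_ _. 0)" for n
  have x_Suc: "x (Suc n) = f (x n)" for n by (simp add: x_def)
  define d where "d = supnorm (\<lambda>s a. x 1 s a - x 0 s a)"
  have increment: "supnorm (\<lambda>s a. x (Suc n) s a - x n s a) \<le> c ^ n * d" for n
  proof (induction n)
    case (Suc n)
    have "supnorm (\<lambda>s a. x (Suc (Suc n)) s a - x (Suc n) s a) \<le> c * (c ^ n * d)"
      using contr order_trans[OF _ mult_left_mono[OF Suc \<open>0 \<le> c\<close>]]
      by (intro supnorm_le) (simp add: x_Suc)
    then show ?case by simp
  qed (simp add: d_def)
  define L where "L s a = x 0 s a + (\<Sum>n. x (Suc n) s a - x n s a)" for s a
  have x_tendsto: "(\<lambda>n. x n s a) \<longlonglongrightarrow> L s a" for s a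
    unfolding L_def
  proof (rule tendsto_of_summable_increments, rule summable_comparison_test)
    show "\<exists>N. \<forall>n\<ge>N. norm (x (Suc n) s a - x n s a) \<le> c ^ n * d"
      using increment abs_le_supnorm order_trans by (simp add: real_norm_def) blast
    show "summable (\<lambda>n. c ^ n * d)" using assms by (intro summable_mult2 summable_geometric) simp
  qed
  have dist_tendsto: "(\<lambda>n. supnorm (\<lambda>s a. x n s a - L s a)) \<longlonglongrightarrow> 0"
    using x_tendsto by (intro supnorm_tendsto_zero) (simp add: LIM_zero)
  have "(\<lambda>n. x (Suc n) s a) \<longlonglongrightarrow> f L s a" for s a
  proof -
    have "(\<lambda>n. x (Suc n) s a - f L s a) \<longlonglongrightarrow> 0"
    proof (rule Lim_null_comparison)
      show "eventually (\<lambda>n. norm (x (Suc n) s a - f L s a) \<le> c * supnorm (\<lambda>s a. x n s a - L s a))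
          sequentially"
        by (simp add: x_Suc contr)
      show "(\<lambda>n. c * supnorm (\<lambda>s a. x n s a - L s a)) \<longlonglongrightarrow> 0"
        using tendsto_mult_right_zero[OF dist_tendsto] .
    qed
    then show ?thesis by (simp add: LIM_zero_iff)
  qed
  then have "f L = L" using LIMSEQ_unique LIMSEQ_Suc[OF x_tendsto] by (blast intro: ext)
  then show ?thesis by blast
qed

locale expectile_mdp =
  fixes P :: "'s::finite \<Rightarrow> 'a::finite \<Rightarrow> (real \<times> 's) measure"
    and \<pi> :: "'s \<Rightarrow> 'a \<Rightarrow> real"
    and \<alpha> \<gamma> :: real
  assumes gamma: "0 < \<gamma>" "\<gamma> < 1"
    and alpha: "0 < \<alpha>" "\<alpha> < 1"
    and policy: "\<And>s a. 0 \<le> \<pi> s a" "\<And>s. (\<Sum>a\<in>UNIV. \<pi> s a) = 1"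
    and P_prob: "\<And>s a. prob_space (P s a)"
    and P_sets: "\<And>s a. sets (P s a) = sets (borel \<Otimes>\<^sub>M count_space UNIV)"
    and reward_range: "\<And>s a. AE x in P s a. 0 \<le> fst x \<and> fst x \<le> 1"
begin

lemma alpha_unit: "0 \<le> \<alpha>" "\<alpha> \<le> 1"
  using alpha by simp_all

abbreviation bellman :: "('s \<Rightarrow> 'a \<Rightarrow> real) \<Rightarrow> 's \<Rightarrow> 'a \<Rightarrow> real" where
  "bellman \<equiv> bellman_exp \<alpha> \<gamma> P \<pi>"

lemma abs_Vpol_le: "\<bar>Vpol \<pi> Q s\<bar> \<le> supnorm Q"
proof -
  have "\<bar>Vpol \<pi> Q s\<bar> \<le> (\<Sum>a\<in>UNIV. \<pi> s a * supnorm Q)"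
    unfolding Vpol_def
    by (rule order_trans[OF sum_abs sum_mono]) (simp add: abs_mult policy(1) mult_left_mono abs_le_supnorm)
  then show ?thesis using policy(2)[of s] by (simp add: sum_distrib_right[symmetric])
qed

lemma abs_Vpol_diff_le: "\<bar>Vpol \<pi> Q s - Vpol \<pi> Q' s\<bar> \<le> supnorm (\<lambda>s a. Q s a - Q' s a)"
proof -
  have "Vpol \<pi> Q s - Vpol \<pi> Q' s = Vpol \<pi> (\<lambda>s a. Q s a - Q' s a) s"
    unfolding Vpol_def by (simp add: sum_subtractf right_diff_distrib)
  then show ?thesis using abs_Vpol_le by simp
qed

lemma measurable_Vpol_snd [measurable]:
  "(\<lambda>x. Vpol \<pi> Q (snd x)) \<in> borel_measurable (borel \<Otimes>\<^sub>M count_space UNIV)"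
  by (rule measurable_compose[OF measurable_snd]) simp

definition target :: "('s \<Rightarrow> 'a \<Rightarrow> real) \<Rightarrow> real \<times> 's \<Rightarrow> real" where
  "target Q = (\<lambda>(r, s'). r + \<gamma> * Vpol \<pi> Q s')"

lemma target_measurable: "target Q \<in> borel_measurable (P s a)"
proof -
  have "target Q = (\<lambda>x. fst x + \<gamma> * Vpol \<pi> Q (snd x))" by (auto simp: target_def fun_eq_iff)
  then show ?thesis by (simp add: measurable_cong_sets[OF P_sets refl])
qed

definition target_law :: "('s \<Rightarrow> 'a \<Rightarrow> real) \<Rightarrow> 's \<Rightarrow> 'a \<Rightarrow> real measure" where
  "target_law Q s a = distr (P s a) borel (target Q)"

lemma bellman_eq_expectile: "bellman Q s a = expectile \<alpha> (target_law Q s a)"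
  unfolding bellman_exp_def target_law_def target_def by simp

lemma expectile_bounded_law_target: "expectile_bounded_law (target_law Q s a) (1 + \<gamma> * supnorm Q) \<alpha>"
proof -
  interpret prob_space "P s a" by (rule P_prob)
  have "AE x in P s a. \<bar>target Q x\<bar> \<le> 1 + \<gamma> * supnorm Q"
    using reward_range[of s a]
  proof eventually_elim
    case (elim x)
    have "\<bar>\<gamma> * Vpol \<pi> Q (snd x)\<bar> \<le> \<gamma> * supnorm Q"
      using abs_Vpol_le[of Q "snd x"] gamma by (simp add: abs_mult mult_left_mono)
    then show ?case using elim by (auto simp: target_def case_prod_beta abs_le_iff)
  qed
  then show ?thesis unfolding expectile_bounded_law_def expectile_bounded_law_axioms_def target_law_def
    using alpha target_measurable by (auto simp: AE_distr_iff intro: prob_space_distr)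
qed

definition mean_score :: "('s \<Rightarrow> 'a \<Rightarrow> real) \<Rightarrow> 's \<Rightarrow> 'a \<Rightarrow> real \<Rightarrow> real" where
  "mean_score Q s a q = (\<integral>x. asym_lin \<alpha> (target Q x - q) \<partial>P s a)"

lemma mean_score_eq_score: "mean_score Q s a q = expectile_bounded_law.score (target_law Q s a) \<alpha> q"
proof -
  interpret expectile_bounded_law "target_law Q s a" "1 + \<gamma> * supnorm Q" \<alpha>
    by (rule expectile_bounded_law_target)
  show ?thesis unfolding mean_score_def score_def
    by (simp add: target_law_def integral_distr target_measurable)
qed

lemma integrable_asym_lin_target: "integrable (P s a) (\<lambda>x. asym_lin \<alpha> (target Q x - q))"
proof -
  interpret expectile_bounded_law "target_law Q s a" "1 + \<gamma> * supnorm Q" \<alpha>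
    by (rule expectile_bounded_law_target)
  show ?thesis using integrable_asym_lin[of q]
    by (simp add: target_law_def integrable_distr_eq target_measurable)
qed

lemma mean_score_bellman_eq_0: "mean_score Q s a (bellman Q s a) = 0"
proof -
  interpret expectile_bounded_law "target_law Q s a" "1 + \<gamma> * supnorm Q" \<alpha>
    by (rule expectile_bounded_law_target)
  show ?thesis by (simp add: mean_score_eq_score bellman_eq_expectile score_expectile_eq_0)
qed

lemma mean_score_slope_bounds:
  assumes "p \<le> q"
  shows "min \<alpha> (1 - \<alpha>) * (q - p) \<le> mean_score Q s a p - mean_score Q s a q"
    and "mean_score Q s a p - mean_score Q s a q \<le> max \<alpha> (1 - \<alpha>) * (q - p)"
proof -
  interpret expectile_bounded_law "target_law Q s a" "1 + \<gamma> * supnorm Q" \<alpha>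
    by (rule expectile_bounded_law_target)
  show "min \<alpha> (1 - \<alpha>) * (q - p) \<le> mean_score Q s a p - mean_score Q s a q"
    and "mean_score Q s a p - mean_score Q s a q \<le> max \<alpha> (1 - \<alpha>) * (q - p)"
    using score_slope_bounds[OF assms] by (simp_all add: mean_score_eq_score)
qed

lemma mean_score_strict_antimono: "p < q \<Longrightarrow> mean_score Q s a q < mean_score Q s a p"
  using mean_score_slope_bounds(1)[of p q Q s a] alpha by (smt (verit) mult_pos_pos)

lemma mean_score_shift_le:
  assumes "\<And>s'. Vpol \<pi> Q s' \<le> Vpol \<pi> Q' s' + c"
  shows "mean_score Q s a q \<le> mean_score Q' s a (q - \<gamma> * c)"
  unfolding mean_score_def
proof (rule integral_mono[OF integrable_asym_lin_target integrable_asym_lin_target])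
  fix x :: "real \<times> 's"
  have "\<gamma> * Vpol \<pi> Q (snd x) \<le> \<gamma> * (Vpol \<pi> Q' (snd x) + c)"
    using assms gamma by (simp add: mult_left_mono)
  then show "asym_lin \<alpha> (target Q x - q) \<le> asym_lin \<alpha> (target Q' x - (q - \<gamma> * c))"
    by (intro asym_lin_mono[OF alpha_unit]) (simp add: target_def case_prod_beta algebra_simps)
qed

lemma bellman_shift_le:
  assumes "\<And>s'. Vpol \<pi> Q s' \<le> Vpol \<pi> Q' s' + c"
  shows "bellman Q s a \<le> bellman Q' s a + \<gamma> * c"
proof (rule ccontr)
  assume "\<not> ?thesis"
  then have "mean_score Q s a (bellman Q s a) < mean_score Q s a (bellman Q' s a + \<gamma> * c)"
    by (intro mean_score_strict_antimono) simp
  also have "\<dots> \<le> mean_score Q' s a (bellman Q' s a)"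
    using mean_score_shift_le[OF assms, of s a "bellman Q' s a + \<gamma> * c"] by simp
  finally show False by (simp add: mean_score_bellman_eq_0)
qed

lemma bellman_contraction:
  "\<bar>bellman Q s a - bellman Q' s a\<bar> \<le> \<gamma> * supnorm (\<lambda>s a. Q s a - Q' s a)"
proof -
  have "bellman Q s a \<le> bellman Q' s a + \<gamma> * supnorm (\<lambda>s a. Q s a - Q' s a)"
  proof (rule bellman_shift_le)
    fix s' show "Vpol \<pi> Q s' \<le> Vpol \<pi> Q' s' + supnorm (\<lambda>s a. Q s a - Q' s a)"
      using abs_Vpol_diff_le[of Q s' Q'] unfolding abs_le_iff by linarith
  qed
  moreover have "bellman Q' s a \<le> bellman Q s a + \<gamma> * supnorm (\<lambda>s a. Q' s a - Q s a)"
  proof (rule bellman_shift_le)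
    fix s' show "Vpol \<pi> Q' s' \<le> Vpol \<pi> Q s' + supnorm (\<lambda>s a. Q' s a - Q s a)"
      using abs_Vpol_diff_le[of Q' s' Q] unfolding abs_le_iff by linarith
  qed
  ultimately show ?thesis by (simp add: supnorm_diff_commute[of Q'] abs_le_iff)
qed

lemma bellman_Qpi: "bellman (Qpi \<alpha> \<gamma> P \<pi>) = Qpi \<alpha> \<gamma> P \<pi>"
proof -
  have "\<exists>!Q. bellman Q = Q"
    using supnorm_contraction_has_fixpoint[of \<gamma> bellman] supnorm_contraction_fixpoint_unique[of \<gamma> bellman]
      gamma bellman_contraction by (metis less_imp_le)
  then show ?thesis unfolding Qpi_def by (rule theI')
qed

end

section \<open>Relaxation with vanishing perturbations\<close>

lemma descent_eventually_below:
  fixes z \<zeta> :: "nat \<Rightarrow> real"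
  assumes "\<not> summable \<zeta>" "\<And>t. 0 \<le> \<zeta> t" "0 < \<kappa>"
    and descent: "\<And>t. t \<ge> T \<Longrightarrow> b < z t \<Longrightarrow> z (Suc t) \<le> z t - \<kappa> * \<zeta> t"
    and invariant: "\<And>t. t \<ge> T \<Longrightarrow> z t \<le> b \<Longrightarrow> z (Suc t) \<le> b"
  shows "eventually (\<lambda>t. z t \<le> b) sequentially"
proof -
  have "\<exists>t\<ge>T. z t \<le> b"
  proof (rule ccontr)
    assume "\<not> ?thesis"
    then have above: "t \<ge> T \<Longrightarrow> b < z t" for t by force
    have partial: "z (T + n) \<le> z T - \<kappa> * (\<Sum>j<n. \<zeta> (j + T))" for n
    proof (induction n)
      case (Suc n)
      then show ?case using descent[of "T + n"] above[of "T + n"] by (simp add: algebra_simps)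
    qed simp
    have "summable (\<lambda>j. \<zeta> (j + T))"
    proof (rule summableI_nonneg_bounded)
      fix n
      have "\<kappa> * (\<Sum>j<n. \<zeta> (j + T)) \<le> z T - b" using partial[of n] above[of "T + n"] by simp
      then show "(\<Sum>j<n. \<zeta> (j + T)) \<le> (z T - b) / \<kappa>" using \<open>0 < \<kappa>\<close> by (simp add: field_simps)
    qed (use assms in auto)
    then show False using assms(1) by (simp add: summable_iff_shift)
  qed
  then obtain t0 where "t0 \<ge> T" "z t0 \<le> b" by blast
  have "z t \<le> b" if "t \<ge> t0" for t
    using that
  proof (induction t rule: dec_induct)
    case (step t)
    then show ?case using invariant[of t] \<open>t0 \<ge> T\<close> by simp
  qed (fact \<open>z t0 \<le> b\<close>)
  then show ?thesis unfolding eventually_sequentially by blast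
qed

text \<open>While \<open>x + e\<close> exceeds \<open>b + 2 * \<delta>\<close> it decreases by at least \<open>m * \<delta> * \<zeta> t\<close>, so by divergence
  of \<open>\<sum> \<zeta>\<close> it eventually drops below that level; once \<open>\<zeta> t * M \<le> 1\<close> the steps never overshoot
  the target \<open>c t\<close>, so it stays there.\<close>
lemma perturbed_relaxation_eventually_le:
  fixes x c e \<zeta> k :: "nat \<Rightarrow> real"
  assumes e: "e \<longlonglongrightarrow> 0" and \<zeta>: "\<zeta> \<longlonglongrightarrow> 0" "\<And>t. 0 \<le> \<zeta> t" "\<not> summable \<zeta>"
    and k: "0 < m" "\<And>t. m \<le> k t" "\<And>t. k t \<le> M"
    and rec: "\<And>t. x (Suc t) + e (Suc t) = x t + e t + \<zeta> t * k t * (c t - x t)"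
    and "0 < \<delta>" and "eventually (\<lambda>t. c t \<le> b) sequentially"
  shows "eventually (\<lambda>t. x t \<le> b + 3 * \<delta>) sequentially"
proof -
  have "0 < M" using k(1) k(2)[of 0] k(3)[of 0] by linarith
  have "eventually (\<lambda>t. \<bar>e t\<bar> \<le> \<delta> \<and> \<zeta> t * M \<le> 1 \<and> c t \<le> b) sequentially"
    using tendstoD[OF e \<open>0 < \<delta>\<close>] tendstoD[OF \<zeta>(1) divide_pos_pos[OF zero_less_one \<open>0 < M\<close>]] assms(10)
  proof eventually_elim
    case (elim t)
    then have "\<zeta> t * M \<le> 1" using \<open>0 < M\<close> \<zeta>(2)[of t] by (simp add: dist_real_def pos_less_divide_eq)
    then show ?case using elim by (simp add: dist_real_def)
  qed
  then obtain T where T: "\<And>t. t \<ge> T \<Longrightarrow> \<bar>e t\<bar> \<le> \<delta> \<and> \<zeta> t * M \<le> 1 \<and> c t \<le> b"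
    unfolding eventually_sequentially by blast
  define z where "z t = x t + e t" for t
  have z_Suc: "z (Suc t) = z t + \<zeta> t * k t * (c t - x t)" for t using rec[of t] by (simp add: z_def)
  have gain_nonneg: "0 \<le> \<zeta> t * k t" for t using \<zeta>(2)[of t] k(1) k(2)[of t] by simp
  have "eventually (\<lambda>t. z t \<le> b + 2 * \<delta>) sequentially"
  proof (rule descent_eventually_below[where \<kappa> = "m * \<delta>" and T = T])
    show "z (Suc t) \<le> z t - m * \<delta> * \<zeta> t" if "t \<ge> T" "b + 2 * \<delta> < z t" for t
    proof -
      have "- \<delta> \<ge> c t - x t" using that T[OF that(1)] by (simp add: z_def abs_le_iff)
      then have "\<zeta> t * k t * (c t - x t) \<le> \<zeta> t * k t * (- \<delta>)" using gain_nonneg by (rule mult_left_mono)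
      also have "\<dots> \<le> \<zeta> t * m * (- \<delta>)"
        using mult_left_mono[OF k(2)[of t] \<zeta>(2)[of t]] \<open>0 < \<delta>\<close> by (simp add: mult_right_mono)
      finally show ?thesis using z_Suc[of t] by (simp add: algebra_simps)
    qed
    show "z (Suc t) \<le> b + 2 * \<delta>" if "t \<ge> T" "z t \<le> b + 2 * \<delta>" for t
    proof (cases "c t \<le> x t")
      case True
      then have "\<zeta> t * k t * (c t - x t) \<le> 0" using gain_nonneg by (simp add: mult_nonneg_nonpos)
      then show ?thesis using z_Suc[of t] that(2) by linarith
    next
      case False
      have "\<zeta> t * k t \<le> \<zeta> t * M" using k(3)[of t] \<zeta>(2)[of t] by (rule mult_left_mono)
      then have "\<zeta> t * k t \<le> 1" using T[OF that(1)] by linarith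
      then have "\<zeta> t * k t * (c t - x t) \<le> c t - x t" using False gain_nonneg
        by (intro mult_left_le_one_le) auto
      then show ?thesis using z_Suc[of t] T[OF that(1)] \<open>0 < \<delta>\<close> by (simp add: z_def abs_le_iff)
    qed
  qed (use \<zeta>(2,3) k(1) \<open>0 < \<delta>\<close> in simp_all)
  then show ?thesis using tendstoD[OF e \<open>0 < \<delta>\<close>]
    by eventually_elim (simp add: z_def dist_real_def abs_le_iff)
qed

lemma perturbed_relaxation_eventually_ge:
  fixes x c e \<zeta> k :: "nat \<Rightarrow> real"
  assumes e: "e \<longlonglongrightarrow> 0" and \<zeta>: "\<zeta> \<longlonglongrightarrow> 0" "\<And>t. 0 \<le> \<zeta> t" "\<not> summable \<zeta>"
    and k: "0 < m" "\<And>t. m \<le> k t" "\<And>t. k t \<le> M"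
    and rec: "\<And>t. x (Suc t) + e (Suc t) = x t + e t + \<zeta> t * k t * (c t - x t)"
    and "0 < \<delta>" and "eventually (\<lambda>t. b \<le> c t) sequentially"
  shows "eventually (\<lambda>t. b - 3 * \<delta> \<le> x t) sequentially"
proof -
  have "eventually (\<lambda>t. - x t \<le> - b + 3 * \<delta>) sequentially"
  proof (rule perturbed_relaxation_eventually_le[where c = "\<lambda>t. - c t" and e = "\<lambda>t. - e t"])
    show "(\<lambda>t. - e t) \<longlonglongrightarrow> 0" using tendsto_minus[OF e] by simp
    show "- x (Suc t) + - e (Suc t) = - x t + - e t + \<zeta> t * k t * (- c t - - x t)" for t
      using rec[of t] by (simp add: algebra_simps)
    show "eventually (\<lambda>t. - c t \<le> - b) sequentially" using assms(10) by (simp add: eventually_mono)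
  qed (fact assms)+
  then show ?thesis by (auto elim: eventually_mono)
qed

lemma bounded_if_eventually_le:
  fixes f :: "nat \<Rightarrow> real"
  assumes "\<And>t. t \<ge> T \<Longrightarrow> f t \<le> B"
  shows "\<exists>B'. \<forall>t. f t \<le> B'"
proof -
  have "f t \<le> max B (Max (f ` {..T}))" for t
  proof (cases "t \<le> T")
    case True
    then have "f t \<le> Max (f ` {..T})" by (intro Max_ge) auto
    then show ?thesis by simp
  qed (use assms[of t] in simp)
  then show ?thesis by blast
qed

lemma abs_convex_combination_le:
  fixes q y l B :: real
  assumes "0 \<le> l" "l \<le> 1" "\<bar>q\<bar> \<le> B" "\<bar>y\<bar> \<le> B"
  shows "\<bar>q + l * (y - q)\<bar> \<le> B"
proof -
  have "\<bar>(1 - l) * q + l * y\<bar> \<le> (1 - l) * B + l * B"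
    using assms by (intro order_trans[OF abs_triangle_ineq] add_mono) (auto simp: abs_mult mult_left_mono)
  then show ?thesis by (simp add: algebra_simps)
qed

context expectile_mdp
begin

lemma mean_score_eq_scaled_gap:
  obtains k where "min \<alpha> (1 - \<alpha>) \<le> k" "k \<le> max \<alpha> (1 - \<alpha>)"
    "mean_score Q s a q = k * (bellman Q s a - q)"
proof (cases "q = bellman Q s a")
  case True
  then show ?thesis using that[of "min \<alpha> (1 - \<alpha>)"] by (simp add: mean_score_bellman_eq_0)
next
  case False
  define k where "k = mean_score Q s a q / (bellman Q s a - q)"
  have eq: "mean_score Q s a q = k * (bellman Q s a - q)" using False by (simp add: k_def)
  have "min \<alpha> (1 - \<alpha>) * (bellman Q s a - q) \<le> k * (bellman Q s a - q)
      \<and> k * (bellman Q s a - q) \<le> max \<alpha> (1 - \<alpha>) * (bellman Q s a - q)" if "q < bellman Q s a"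
    using mean_score_slope_bounds[of q "bellman Q s a" Q s a] that
    by (simp add: eq mean_score_bellman_eq_0)
  moreover have "min \<alpha> (1 - \<alpha>) * (q - bellman Q s a) \<le> k * (q - bellman Q s a)
      \<and> k * (q - bellman Q s a) \<le> max \<alpha> (1 - \<alpha>) * (q - bellman Q s a)" if "bellman Q s a < q"
    using mean_score_slope_bounds[of "bellman Q s a" q Q s a] that
    by (simp add: eq mean_score_bellman_eq_0 algebra_simps)
  ultimately have "min \<alpha> (1 - \<alpha>) \<le> k \<and> k \<le> max \<alpha> (1 - \<alpha>)"
    using False mult_le_cancel_right_pos[of "bellman Q s a - q"] mult_le_cancel_right_pos[of "q - bellman Q s a"]
    by (cases "q < bellman Q s a") simp_all
  then show ?thesis using that eq by blast
qed

text \<open>Once \<open>2 * \<zeta> \<le> 1\<close>, every step moves \<open>q t s a\<close> towards a target of modulus at most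
  \<open>1 + \<gamma> * supnorm (q t)\<close>, so the ball of radius \<open>max (supnorm (q T)) (1 / (1 - \<gamma>))\<close>
  is invariant.\<close>
lemma asym_lin_iteration_bounded:
  fixes q \<zeta> r :: "nat \<Rightarrow> 's \<Rightarrow> 'a \<Rightarrow> real" and s' :: "nat \<Rightarrow> 's \<Rightarrow> 'a \<Rightarrow> 's"
  assumes rec: "\<And>t s a. q (Suc t) s a
      = q t s a + 2 * \<zeta> t s a * asym_lin \<alpha> (r t s a + \<gamma> * Vpol \<pi> (q t) (s' t s a) - q t s a)"
    and r: "\<And>t s a. 0 \<le> r t s a \<and> r t s a \<le> 1"
    and \<zeta>: "\<And>t s a. 0 \<le> \<zeta> t s a" "\<And>s a. (\<lambda>t. \<zeta> t s a) \<longlonglongrightarrow> 0"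
  shows "\<exists>B. \<forall>t. supnorm (q t) \<le> B"
proof -
  have "eventually (\<lambda>t. \<forall>s a. \<zeta> t s a < 1 / 2) sequentially"
    using tendstoD[OF \<zeta>(2), of "1 / 2"]
    by (intro eventually_all_finite) (simp add: dist_real_def abs_of_nonneg[OF \<zeta>(1)])
  then obtain T where T: "\<And>t s a. t \<ge> T \<Longrightarrow> \<zeta> t s a < 1 / 2"
    unfolding eventually_sequentially by blast
  define B where "B = max (supnorm (q T)) (1 / (1 - \<gamma>))"
  have B: "1 + \<gamma> * B \<le> B"
  proof -
    have "1 / (1 - \<gamma>) \<le> B" by (simp add: B_def)
    then have "1 \<le> B * (1 - \<gamma>)" using gamma by (simp add: field_simps)
    then show ?thesis by (simp add: algebra_simps)
  qed
  have "supnorm (q t) \<le> B" if "t \<ge> T" for t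
    using that
  proof (induction t rule: dec_induct)
    case base
    then show ?case by (simp add: B_def)
  next
    case (step t)
    show ?case
    proof (rule supnorm_le)
      fix s a
      define y where "y = r t s a + \<gamma> * Vpol \<pi> (q t) (s' t s a)"
      obtain c where c: "0 \<le> c" "c \<le> 1" "asym_lin \<alpha> (y - q t s a) = c * (y - q t s a)"
        using asym_lin_eq_scaled[OF alpha_unit] by blast
      have "\<bar>\<gamma> * Vpol \<pi> (q t) (s' t s a)\<bar> \<le> \<gamma> * B"
        using abs_Vpol_le[of "q t" "s' t s a"] step.IH gamma by (simp add: abs_mult mult_left_mono)
      then have "\<bar>y\<bar> \<le> B" using r[of t s a] B unfolding y_def by (simp add: abs_le_iff)
      moreover have "\<bar>q t s a\<bar> \<le> B" using abs_le_supnorm[of "q t" s a] step.IH by linarith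
      moreover have "2 * \<zeta> t s a * c \<le> 1 * 1"
        using T[of t s a] step.hyps c(1,2) by (intro mult_mono) auto
      ultimately have "\<bar>q t s a + (2 * \<zeta> t s a * c) * (y - q t s a)\<bar> \<le> B"
        using c \<zeta>(1)[of t s a] by (intro abs_convex_combination_le) auto
      then show "\<bar>q (Suc t) s a\<bar> \<le> B" using rec[of t s a] c(3) by (simp add: y_def)
    qed
  qed
  then show ?thesis by (rule bounded_if_eventually_le)
qed

lemma eventually_supnorm_contracts:
  fixes q \<zeta> w :: "nat \<Rightarrow> 's \<Rightarrow> 'a \<Rightarrow> real"
  assumes fixpoint: "bellman Q' = Q'"
    and rec: "\<And>t s a. q (Suc t) s a = q t s a + 2 * \<zeta> t s a * (mean_score (q t) s a (q t s a) + w t s a)"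
    and \<zeta>: "\<And>t s a. 0 \<le> \<zeta> t s a" "\<And>s a. (\<lambda>t. \<zeta> t s a) \<longlonglongrightarrow> 0" "\<And>s a. \<not> summable (\<lambda>t. \<zeta> t s a)"
    and noise: "\<And>s a. summable (\<lambda>t. \<zeta> t s a * w t s a)"
    and D: "eventually (\<lambda>t. supnorm (\<lambda>s a. q t s a - Q' s a) \<le> D) sequentially"
    and "0 < \<delta>"
  shows "eventually (\<lambda>t. supnorm (\<lambda>s a. q t s a - Q' s a) \<le> \<gamma> * D + 3 * \<delta>) sequentially"
proof -
  have "eventually (\<lambda>t. \<bar>q t s a - Q' s a\<bar> \<le> \<gamma> * D + 3 * \<delta>) sequentially" for s a
  proof -
    define e where "e t = 2 * (\<Sum>u. \<zeta> u s a * w u s a) - 2 * (\<Sum>u<t. \<zeta> u s a * w u s a)" for t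
    have e: "e \<longlonglongrightarrow> 0"
      using tendsto_diff[OF tendsto_const tendsto_mult[OF tendsto_const summable_LIMSEQ[OF noise]],
          of "2 * (\<Sum>u. \<zeta> u s a * w u s a)" 2 s a]
      by (simp add: e_def[abs_def])
    have "\<forall>t. \<exists>k. min \<alpha> (1 - \<alpha>) \<le> k \<and> k \<le> max \<alpha> (1 - \<alpha>)
        \<and> mean_score (q t) s a (q t s a) = k * (bellman (q t) s a - q t s a)"
      by (metis mean_score_eq_scaled_gap)
    then obtain k where k: "\<And>t. min \<alpha> (1 - \<alpha>) \<le> k t" "\<And>t. k t \<le> max \<alpha> (1 - \<alpha>)"
      "\<And>t. mean_score (q t) s a (q t s a) = k t * (bellman (q t) s a - q t s a)"
      by metis
    have relax: "q (Suc t) s a + e (Suc t)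
        = q t s a + e t + (2 * \<zeta> t s a) * k t * (bellman (q t) s a - q t s a)" for t
      using rec[of t s a] k(3)[of t] by (simp add: e_def algebra_simps)
    have gain: "(\<lambda>t. 2 * \<zeta> t s a) \<longlonglongrightarrow> 0" "\<not> summable (\<lambda>t. 2 * \<zeta> t s a)"
      using tendsto_mult_right_zero[OF \<zeta>(2)[of s a], of 2] \<zeta>(3)[of s a] by (simp_all add: summable_cmult_iff)
    have target: "eventually (\<lambda>t. \<bar>bellman (q t) s a - Q' s a\<bar> \<le> \<gamma> * D) sequentially"
      using D
    proof eventually_elim
      case (elim t)
      then show ?case using bellman_contraction[of "q t" s a Q'] gamma fixpoint
        by (metis (no_types, lifting) mult_left_mono order_trans less_imp_le)
    qed
    have "eventually (\<lambda>t. q t s a \<le> Q' s a + \<gamma> * D + 3 * \<delta>) sequentially"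
      using target alpha
      by (intro perturbed_relaxation_eventually_le[OF e gain(1) _ gain(2) _ k(1,2) relax \<open>0 < \<delta>\<close>])
        (auto simp: \<zeta>(1) abs_le_iff elim: eventually_mono)
    moreover have "eventually (\<lambda>t. Q' s a - \<gamma> * D - 3 * \<delta> \<le> q t s a) sequentially"
      using target alpha
      by (intro perturbed_relaxation_eventually_ge[OF e gain(1) _ gain(2) _ k(1,2) relax \<open>0 < \<delta>\<close>])
        (auto simp: \<zeta>(1) abs_le_iff elim: eventually_mono)
    ultimately show ?thesis by eventually_elim (simp add: abs_le_iff)
  qed
  then have "eventually (\<lambda>t. \<forall>s a. \<bar>q t s a - Q' s a\<bar> \<le> \<gamma> * D + 3 * \<delta>) sequentially"
    by (intro eventually_all_finite)
  then show ?thesis by eventually_elim (simp add: supnorm_le)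
qed

lemma eventually_supnorm_le_geometric:
  fixes q \<zeta> w :: "nat \<Rightarrow> 's \<Rightarrow> 'a \<Rightarrow> real"
  assumes D: "\<And>t. supnorm (\<lambda>s a. q t s a - Qpi \<alpha> \<gamma> P \<pi> s a) \<le> D"
    and rec: "\<And>t s a. q (Suc t) s a = q t s a + 2 * \<zeta> t s a * (mean_score (q t) s a (q t s a) + w t s a)"
    and \<zeta>: "\<And>t s a. 0 \<le> \<zeta> t s a" "\<And>s a. (\<lambda>t. \<zeta> t s a) \<longlonglongrightarrow> 0" "\<And>s a. \<not> summable (\<lambda>t. \<zeta> t s a)"
    and noise: "\<And>s a. summable (\<lambda>t. \<zeta> t s a * w t s a)"
    and "0 < \<delta>"
  shows "eventually (\<lambda>t. supnorm (\<lambda>s a. q t s a - Qpi \<alpha> \<gamma> P \<pi> s a) \<le> \<gamma> ^ n * D + 3 * \<delta> / (1 - \<gamma>))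
    sequentially"
proof (induction n)
  case 0
  then show ?case using D \<open>0 < \<delta>\<close> gamma by (simp add: add_increasing2)
next
  case (Suc n)
  have "\<gamma> * (\<gamma> ^ n * D + 3 * \<delta> / (1 - \<gamma>)) + 3 * \<delta> = \<gamma> ^ Suc n * D + 3 * \<delta> / (1 - \<gamma>)"
    using gamma by (simp add: field_simps)
  then show ?case using eventually_supnorm_contracts[OF bellman_Qpi rec \<zeta> noise Suc \<open>0 < \<delta>\<close>] by simp
qed

lemma perturbed_bellman_iteration_tendsto:
  fixes q \<zeta> w :: "nat \<Rightarrow> 's \<Rightarrow> 'a \<Rightarrow> real"
  assumes bounded: "\<And>t. supnorm (q t) \<le> B"
    and rec: "\<And>t s a. q (Suc t) s a = q t s a + 2 * \<zeta> t s a * (mean_score (q t) s a (q t s a) + w t s a)"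
    and \<zeta>: "\<And>t s a. 0 \<le> \<zeta> t s a" "\<And>s a. (\<lambda>t. \<zeta> t s a) \<longlonglongrightarrow> 0" "\<And>s a. \<not> summable (\<lambda>t. \<zeta> t s a)"
    and noise: "\<And>s a. summable (\<lambda>t. \<zeta> t s a * w t s a)"
  shows "(\<lambda>t. q t s a) \<longlonglongrightarrow> Qpi \<alpha> \<gamma> P \<pi> s a"
proof (rule tendstoI)
  fix r :: real assume "0 < r"
  define D where "D = B + supnorm (Qpi \<alpha> \<gamma> P \<pi>)"
  have D: "supnorm (\<lambda>s a. q t s a - Qpi \<alpha> \<gamma> P \<pi> s a) \<le> D" for t
  proof (rule supnorm_le)
    fix s a
    show "\<bar>q t s a - Qpi \<alpha> \<gamma> P \<pi> s a\<bar> \<le> D"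
      using abs_le_supnorm[of "q t" s a] abs_le_supnorm[of "Qpi \<alpha> \<gamma> P \<pi>" s a] bounded[of t]
      unfolding D_def by linarith
  qed
  have "eventually (\<lambda>n. \<bar>\<gamma> ^ n * D\<bar> < r / 2) sequentially"
    using tendstoD[OF tendsto_mult_left_zero[OF LIMSEQ_power_zero[of \<gamma>]], of "r / 2" D] gamma \<open>0 < r\<close>
    by (simp add: dist_real_def)
  then obtain n where "\<bar>\<gamma> ^ n * D\<bar> < r / 2" by (auto simp: eventually_sequentially)
  then have n: "\<gamma> ^ n * D < r / 2" by (simp add: abs_less_iff)
  define \<delta> where "\<delta> = r * (1 - \<gamma>) / 6"
  have "0 < \<delta>" using \<open>0 < r\<close> gamma by (simp add: \<delta>_def)
  have half: "3 * \<delta> / (1 - \<gamma>) = r / 2" using gamma by (simp add: \<delta>_def field_simps)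
  have "eventually (\<lambda>t. supnorm (\<lambda>s a. q t s a - Qpi \<alpha> \<gamma> P \<pi> s a) \<le> \<gamma> ^ n * D + r / 2) sequentially"
    using eventually_supnorm_le_geometric[OF D rec \<zeta> noise \<open>0 < \<delta>\<close>, of n] unfolding half .
  then show "eventually (\<lambda>t. dist (q t s a) (Qpi \<alpha> \<gamma> P \<pi> s a) < r) sequentially"
  proof eventually_elim
    case (elim t)
    then show ?case using n abs_le_supnorm[of "\<lambda>s a. q t s a - Qpi \<alpha> \<gamma> P \<pi> s a" s a]
      by (simp add: dist_real_def)
  qed
qed

end

section \<open>Martingale differences\<close>

definition first_passage :: "real \<Rightarrow> nat \<Rightarrow> (nat \<Rightarrow> real) \<Rightarrow> nat \<Rightarrow> real" where
  "first_passage \<epsilon> n y k = (if \<epsilon> \<le> \<bar>y k\<bar> \<and> (\<forall>j\<in>{n..<k}. \<bar>y j\<bar> < \<epsilon>) then 1 else 0)"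

lemma first_passage_eq_indicator_Least:
  assumes "k \<in> {n..N}" "\<exists>k\<in>{n..N}. \<epsilon> \<le> \<bar>y k\<bar>"
  shows "first_passage \<epsilon> n y k = (if k = (LEAST k. k \<in> {n..N} \<and> \<epsilon> \<le> \<bar>y k\<bar>) then 1 else 0)"
proof -
  let ?P = "\<lambda>k. k \<in> {n..N} \<and> \<epsilon> \<le> \<bar>y k\<bar>"
  define k0 where "k0 = (LEAST k. ?P k)"
  have "?P k0" using assms(2) LeastI_ex[of ?P] unfolding k0_def by blast
  have "first_passage \<epsilon> n y k \<in> {0, 1}" by (simp add: first_passage_def)
  have "first_passage \<epsilon> n y k = 1 \<longleftrightarrow> ?P k \<and> (\<forall>j\<in>{n..<k}. \<not> ?P j)"
    using assms(1) by (auto simp: first_passage_def not_le)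
  also have "\<dots> \<longleftrightarrow> k = k0"
  proof
    assume first: "?P k \<and> (\<forall>j\<in>{n..<k}. \<not> ?P j)"
    then have "k0 \<le> k" unfolding k0_def by (intro Least_le) simp
    moreover have "\<not> k0 < k"
    proof
      assume "k0 < k"
      then have "k0 \<in> {n..<k}" using \<open>?P k0\<close> by simp
      then show False using first \<open>?P k0\<close> by blast
    qed
    ultimately show "k = k0" by simp
  next
    assume "k = k0"
    have "\<not> ?P j" if "j \<in> {n..<k0}" for j
      using not_less_Least[of j ?P] that unfolding k0_def by simp
    then show "?P k \<and> (\<forall>j\<in>{n..<k}. \<not> ?P j)" using \<open>k = k0\<close> \<open>?P k0\<close> by simp
  qed
  finally show ?thesis unfolding k0_def[symmetric] using \<open>first_passage \<epsilon> n y k \<in> {0, 1}\<close> by auto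
qed

lemma sum_first_passage_mult:
  assumes "\<exists>k\<in>{n..N}. \<epsilon> \<le> \<bar>y k\<bar>"
  shows "(\<Sum>k\<in>{n..N}. first_passage \<epsilon> n y k * f k) = f (LEAST k. k \<in> {n..N} \<and> \<epsilon> \<le> \<bar>y k\<bar>)"
proof -
  define k0 where "k0 = (LEAST k. k \<in> {n..N} \<and> \<epsilon> \<le> \<bar>y k\<bar>)"
  have "k0 \<in> {n..N}"
    using LeastI_ex[of "\<lambda>k. k \<in> {n..N} \<and> \<epsilon> \<le> \<bar>y k\<bar>"] assms unfolding k0_def by blast
  have "(\<Sum>k\<in>{n..N}. first_passage \<epsilon> n y k * f k) = (\<Sum>k\<in>{n..N}. if k = k0 then f k else 0)"
    using first_passage_eq_indicator_Least[OF _ assms] by (intro sum.cong) (simp_all add: k0_def)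
  then show ?thesis using \<open>k0 \<in> {n..N}\<close> by (simp add: k0_def)
qed

lemma sum_first_passage:
  "(\<Sum>k\<in>{n..N}. first_passage \<epsilon> n y k) = (if \<exists>k\<in>{n..N}. \<epsilon> \<le> \<bar>y k\<bar> then 1 else 0)"
  using sum_first_passage_mult[of n N \<epsilon> y "\<lambda>_. 1"] by (auto simp: first_passage_def)

lemma first_passage_square_bound:
  assumes "0 < \<epsilon>"
  shows "\<epsilon>\<^sup>2 * (\<Sum>k\<in>{n..N}. first_passage \<epsilon> n y k)
      + 2 * (\<Sum>k\<in>{n..N}. first_passage \<epsilon> n y k * y k * (y N - y k)) \<le> (y N)\<^sup>2"
proof (cases "\<exists>k\<in>{n..N}. \<epsilon> \<le> \<bar>y k\<bar>")
  case False
  then show ?thesis by (simp add: first_passage_def)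
next
  case True
  define k0 where "k0 = (LEAST k. k \<in> {n..N} \<and> \<epsilon> \<le> \<bar>y k\<bar>)"
  have "\<epsilon> \<le> \<bar>y k0\<bar>"
    using LeastI_ex[of "\<lambda>k. k \<in> {n..N} \<and> \<epsilon> \<le> \<bar>y k\<bar>"] True unfolding k0_def by blast
  then have "\<epsilon>\<^sup>2 \<le> (y k0)\<^sup>2" using \<open>0 < \<epsilon>\<close> by (simp add: abs_le_square_iff[symmetric])
  moreover have "(y k0)\<^sup>2 + 2 * (y k0 * (y N - y k0)) + (y N - y k0)\<^sup>2 = (y N)\<^sup>2"
    by (simp add: power2_eq_square algebra_simps)
  moreover have "(\<Sum>k\<in>{n..N}. first_passage \<epsilon> n y k * y k * (y N - y k)) = y k0 * (y N - y k0)"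
    using sum_first_passage_mult[OF True, of "\<lambda>k. y k * (y N - y k)"] by (simp add: mult.assoc k0_def)
  ultimately show ?thesis using True by (simp add: sum_first_passage) (smt (verit) zero_le_power2)
qed

locale filtered_prob_space = prob_space M + filtration "space M" F
  for M :: "'w measure" and F :: "nat \<Rightarrow> 'w measure" +
  assumes sets_F_subset: "\<And>t. sets (F t) \<subseteq> sets M"
begin

lemma subalgebra_F: "subalgebra M (F t)"
  using sets_F_subset space_F by (simp add: subalgebra_def)

lemma measurable_F_mono: "t \<le> u \<Longrightarrow> f \<in> F t \<rightarrow>\<^sub>M N \<Longrightarrow> f \<in> F u \<rightarrow>\<^sub>M N"
proof -
  assume "t \<le> u" "f \<in> F t \<rightarrow>\<^sub>M N"
  have "subalgebra (F u) (F t)" using sets_F_mono[OF \<open>t \<le> u\<close>] by (simp add: subalgebra_def space_F)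
  then show ?thesis using \<open>f \<in> F t \<rightarrow>\<^sub>M N\<close> by (rule measurable_from_subalg)
qed

lemma measurable_F_imp_M: "f \<in> F t \<rightarrow>\<^sub>M N \<Longrightarrow> f \<in> M \<rightarrow>\<^sub>M N"
  by (rule measurable_from_subalg[OF subalgebra_F])

end

text \<open>The martingale difference property is stated as orthogonality of \<open>d t\<close> to all bounded
  \<open>F t\<close>-measurable variables, which avoids conditional expectations.\<close>
locale bounded_martingale_diff = filtered_prob_space M F for M :: "'w measure" and F +
  fixes d :: "nat \<Rightarrow> 'w \<Rightarrow> real" and C V :: real
  assumes d_measurable: "\<And>t. d t \<in> borel_measurable (F (Suc t))"
    and abs_d_le: "\<And>t w. \<bar>d t w\<bar> \<le> C"
    and integral_mult_d_eq_0:
      "\<And>t Z B. Z \<in> borel_measurable (F t) \<Longrightarrow> (\<And>w. \<bar>Z w\<bar> \<le> B) \<Longrightarrow> (\<integral>w. Z w * d t w \<partial>M) = 0"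
    and variance_bound: "\<And>N. (\<Sum>t<N. \<integral>w. (d t w)\<^sup>2 \<partial>M) \<le> V"
begin

lemma C_nonneg: "0 \<le> C"
  using abs_d_le[of 0 undefined] by linarith

lemma integrable_bounded:
  fixes B :: real
  shows "f \<in> borel_measurable M \<Longrightarrow> (\<And>w. \<bar>f w\<bar> \<le> B) \<Longrightarrow> integrable M f"
  by (rule integrable_const_bound[where B = B]) auto

definition block_sum :: "nat \<Rightarrow> nat \<Rightarrow> 'w \<Rightarrow> real" where
  "block_sum n k w = (\<Sum>t\<in>{n..<k}. d t w)"

lemma block_sum_measurable:
  assumes "j \<le> k"
  shows "block_sum n j \<in> borel_measurable (F k)"
  unfolding block_sum_def
proof (rule borel_measurable_sum)
  fix t assume "t \<in> {n..<j}"
  then show "d t \<in> borel_measurable (F k)" using assms by (intro measurable_F_mono[OF _ d_measurable]) auto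
qed

lemma block_sum_measurable_M [measurable]: "block_sum n k \<in> borel_measurable M"
  using measurable_F_imp_M[OF block_sum_measurable[OF order.refl]] .

lemma d_measurable_M [measurable]: "d t \<in> borel_measurable M"
  using measurable_F_imp_M[OF d_measurable] .

lemma abs_block_sum_le: "k \<le> N \<Longrightarrow> \<bar>block_sum n k w\<bar> \<le> real N * C"
proof -
  assume "k \<le> N"
  have "\<bar>block_sum n k w\<bar> \<le> real (card {n..<k}) * C"
    unfolding block_sum_def by (rule order_trans[OF sum_abs sum_bounded_above]) (rule abs_d_le)
  also have "\<dots> \<le> real N * C" using C_nonneg \<open>k \<le> N\<close> by (intro mult_right_mono) auto
  finally show ?thesis .
qed

lemma block_sum_diff: "n \<le> k \<Longrightarrow> k \<le> N \<Longrightarrow> block_sum n N w - block_sum n k w = (\<Sum>t\<in>{k..<N}. d t w)"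
  unfolding block_sum_def using sum.atLeastLessThan_concat[of n k N "\<lambda>t. d t w"] by simp

lemma integrable_block_sum_mult_d:
  assumes "k \<le> N" "Z \<in> borel_measurable M" "\<And>w. \<bar>Z w\<bar> \<le> 1"
  shows "integrable M (\<lambda>w. Z w * block_sum n k w * d t w)"
proof (rule integrable_bounded[where B = "1 * (real N * C) * C"])
  fix w show "\<bar>Z w * block_sum n k w * d t w\<bar> \<le> 1 * (real N * C) * C"
    unfolding abs_mult using assms abs_block_sum_le abs_d_le
    by (intro mult_mono) (auto simp: C_nonneg)
qed (use assms in simp)

lemma integral_block_sum_square:
  "n \<le> N \<Longrightarrow> (\<integral>w. (block_sum n N w)\<^sup>2 \<partial>M) = (\<Sum>t\<in>{n..<N}. \<integral>w. (d t w)\<^sup>2 \<partial>M)"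
proof (induction N rule: dec_induct)
  case (step N)
  have split: "block_sum n (Suc N) w = block_sum n N w + d N w" for w
    using step(1) by (simp add: block_sum_def)
  have "integrable M (\<lambda>w. (block_sum n N w)\<^sup>2)"
    using abs_block_sum_le[of N N n]
    by (intro integrable_bounded[where B = "(real N * C)\<^sup>2"]) (auto simp: abs_le_square_iff[symmetric] C_nonneg)
  moreover have "integrable M (\<lambda>w. (d N w)\<^sup>2)"
    using abs_d_le[of N] by (intro integrable_bounded[where B = "C\<^sup>2"]) (auto simp: abs_le_square_iff[symmetric] C_nonneg)
  moreover have "integrable M (\<lambda>w. 1 * block_sum n N w * d N w)"
    by (rule integrable_block_sum_mult_d) auto
  moreover have "(\<integral>w. block_sum n N w * d N w \<partial>M) = 0"
    using abs_block_sum_le[of N N n] by (intro integral_mult_d_eq_0 block_sum_measurable) auto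
  ultimately have "(\<integral>w. (block_sum n (Suc N) w)\<^sup>2 \<partial>M)
      = (\<integral>w. (block_sum n N w)\<^sup>2 \<partial>M) + (\<integral>w. (d N w)\<^sup>2 \<partial>M)"
    by (simp add: split power2_sum mult.assoc)
  then show ?case using step by simp
qed (simp add: block_sum_def)

lemma first_passage_block_sum_measurable:
  "(\<lambda>w. first_passage \<epsilon> n (\<lambda>j. block_sum n j w) k) \<in> borel_measurable (F k)"
proof -
  have [measurable]: "block_sum n k \<in> borel_measurable (F k)" by (rule block_sum_measurable) simp
  have "Measurable.pred (F k) (\<lambda>w. \<forall>j\<in>{n..<k}. \<bar>block_sum n j w\<bar> < \<epsilon>)"
  proof (rule pred_intros_countable_bounded(3))
    fix j assume "j \<in> {n..<k}"
    then have [measurable]: "block_sum n j \<in> borel_measurable (F k)" by (intro block_sum_measurable) simp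
    show "Measurable.pred (F k) (\<lambda>w. \<bar>block_sum n j w\<bar> < \<epsilon>)" by measurable
  qed
  then show ?thesis unfolding first_passage_def by measurable
qed

lemma first_passage_cross_term:
  fixes \<epsilon> :: real
  assumes "n \<le> k" "k \<le> N"
  defines "Z \<equiv> \<lambda>w. first_passage \<epsilon> n (\<lambda>j. block_sum n j w) k"
  shows "integrable M (\<lambda>w. Z w * block_sum n k w * (block_sum n N w - block_sum n k w))"
    and "(\<integral>w. Z w * block_sum n k w * (block_sum n N w - block_sum n k w) \<partial>M) = 0"
proof -
  have Z: "Z \<in> borel_measurable (F k)" "\<And>w. \<bar>Z w\<bar> \<le> 1"
    unfolding Z_def by (rule first_passage_block_sum_measurable) (simp add: first_passage_def)
  have expand: "(\<lambda>w. Z w * block_sum n k w * (block_sum n N w - block_sum n k w))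
      = (\<lambda>w. \<Sum>t\<in>{k..<N}. Z w * block_sum n k w * d t w)"
    unfolding block_sum_diff[OF assms(1,2)] by (simp only: sum_distrib_left)
  have integrable: "integrable M (\<lambda>w. Z w * block_sum n k w * d t w)" for t
    by (rule integrable_block_sum_mult_d[OF assms(2) measurable_F_imp_M[OF Z(1)] Z(2)])
  then show "integrable M (\<lambda>w. Z w * block_sum n k w * (block_sum n N w - block_sum n k w))"
    unfolding expand by (rule Bochner_Integration.integrable_sum)
  have "(\<integral>w. Z w * block_sum n k w * d t w \<partial>M) = 0" if "t \<in> {k..<N}" for t
  proof (rule integral_mult_d_eq_0)
    have "(\<lambda>w. Z w * block_sum n k w) \<in> borel_measurable (F k)"
      using Z(1) block_sum_measurable[of k k n] by (intro borel_measurable_times) auto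
    then show "(\<lambda>w. Z w * block_sum n k w) \<in> borel_measurable (F t)"
      using that by (intro measurable_F_mono[of k t]) auto
    show "\<bar>Z w * block_sum n k w\<bar> \<le> 1 * (real N * C)" for w
      unfolding abs_mult using Z(2) abs_block_sum_le[OF assms(2)] by (intro mult_mono) auto
  qed
  then show "(\<integral>w. Z w * block_sum n k w * (block_sum n N w - block_sum n k w) \<partial>M) = 0"
    unfolding expand by (simp add: Bochner_Integration.integral_sum[OF integrable])
qed

lemma first_passage_cross_sum:
  fixes \<epsilon> :: real and n N :: nat
  defines "cross \<equiv> \<lambda>w. \<Sum>k\<in>{n..N}. first_passage \<epsilon> n (\<lambda>j. block_sum n j w) k
      * block_sum n k w * (block_sum n N w - block_sum n k w)"
  shows "integrable M cross" and "(\<integral>w. cross w \<partial>M) = 0"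
proof -
  have "integrable M cross"
    unfolding cross_def using first_passage_cross_term(1) by (intro Bochner_Integration.integrable_sum) auto
  moreover have "(\<integral>w. cross w \<partial>M) = 0"
    unfolding cross_def using first_passage_cross_term
    by (subst Bochner_Integration.integral_sum) auto
  ultimately show "integrable M cross" and "(\<integral>w. cross w \<partial>M) = 0" by blast+
qed

lemma integrable_sum_first_passage:
  "integrable M (\<lambda>w. \<Sum>k\<in>{n..N}. first_passage \<epsilon> n (\<lambda>j. block_sum n j w) k)"
  using measurable_F_imp_M[OF first_passage_block_sum_measurable]
  by (intro Bochner_Integration.integrable_sum integrable_bounded[where B = 1]) (auto simp: first_passage_def)

lemma integral_sum_first_passage:
  "(\<integral>w. (\<Sum>k\<in>{n..N}. first_passage \<epsilon> n (\<lambda>j. block_sum n j w) k) \<partial>M)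
    = measure M {w \<in> space M. \<exists>k\<in>{n..N}. \<epsilon> \<le> \<bar>block_sum n k w\<bar>}"
proof -
  define E where "E = {w \<in> space M. \<exists>k\<in>{n..N}. \<epsilon> \<le> \<bar>block_sum n k w\<bar>}"
  have "Measurable.pred M (\<lambda>w. \<exists>k\<in>{n..N}. \<epsilon> \<le> \<bar>block_sum n k w\<bar>)"
    by (rule pred_intros_countable_bounded(4)) measurable
  then have "E \<in> sets M" unfolding E_def by measurable
  have "(\<integral>w. (\<Sum>k\<in>{n..N}. first_passage \<epsilon> n (\<lambda>j. block_sum n j w) k) \<partial>M) = (\<integral>w. indicator E w \<partial>M)"
    by (intro Bochner_Integration.integral_cong) (auto simp: sum_first_passage E_def indicator_def)
  then show ?thesis using \<open>E \<in> sets M\<close> by (simp add: E_def)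
qed

lemma kolmogorov_maximal_inequality:
  assumes "0 < \<epsilon>" "n \<le> N"
  shows "\<epsilon>\<^sup>2 * measure M {w \<in> space M. \<exists>k\<in>{n..N}. \<epsilon> \<le> \<bar>block_sum n k w\<bar>}
    \<le> (\<Sum>t\<in>{n..<N}. \<integral>w. (d t w)\<^sup>2 \<partial>M)"
proof -
  define I where "I = (\<lambda>w. \<Sum>k\<in>{n..N}. first_passage \<epsilon> n (\<lambda>j. block_sum n j w) k)"
  define cross where "cross = (\<lambda>w. \<Sum>k\<in>{n..N}. first_passage \<epsilon> n (\<lambda>j. block_sum n j w) k
      * block_sum n k w * (block_sum n N w - block_sum n k w))"
  have integrable: "integrable M I" "integrable M cross"
    unfolding I_def cross_def by (rule integrable_sum_first_passage, rule first_passage_cross_sum(1))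
  have "\<epsilon>\<^sup>2 * measure M {w \<in> space M. \<exists>k\<in>{n..N}. \<epsilon> \<le> \<bar>block_sum n k w\<bar>}
      = (\<integral>w. \<epsilon>\<^sup>2 * I w + 2 * cross w \<partial>M)"
    using integrable integral_sum_first_passage[where \<epsilon> = \<epsilon> and n = n and N = N]
      first_passage_cross_sum(2)[where \<epsilon> = \<epsilon> and n = n and N = N]
    by (simp add: I_def cross_def)
  also have "\<dots> \<le> (\<integral>w. (block_sum n N w)\<^sup>2 \<partial>M)"
  proof (rule integral_mono)
    show "integrable M (\<lambda>w. \<epsilon>\<^sup>2 * I w + 2 * cross w)" using integrable by simp
    show "integrable M (\<lambda>w. (block_sum n N w)\<^sup>2)"
      using abs_block_sum_le[of N N n]
      by (intro integrable_bounded[where B = "(real N * C)\<^sup>2"]) (auto simp: abs_le_square_iff[symmetric] C_nonneg)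
    show "\<epsilon>\<^sup>2 * I w + 2 * cross w \<le> (block_sum n N w)\<^sup>2" for w
      using first_passage_square_bound[OF assms(1)] by (simp add: I_def cross_def)
  qed
  also have "\<dots> = (\<Sum>t\<in>{n..<N}. \<integral>w. (d t w)\<^sup>2 \<partial>M)" by (rule integral_block_sum_square[OF assms(2)])
  finally show ?thesis .
qed

lemma summable_variances: "summable (\<lambda>t. \<integral>w. (d t w)\<^sup>2 \<partial>M)"
  using variance_bound by (intro summableI_nonneg_bounded) auto

lemma measure_exists_large_block_sum_le:
  assumes "0 < \<epsilon>"
  shows "\<epsilon>\<^sup>2 * measure M {w \<in> space M. \<exists>k\<ge>n. \<epsilon> \<le> \<bar>block_sum n k w\<bar>}
    \<le> (\<Sum>t. \<integral>w. (d t w)\<^sup>2 \<partial>M) - (\<Sum>t<n. \<integral>w. (d t w)\<^sup>2 \<partial>M)"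
proof -
  define v where "v t = (\<integral>w. (d t w)\<^sup>2 \<partial>M)" for t
  define A where "A N = {w \<in> space M. \<exists>k\<in>{n..n + N}. \<epsilon> \<le> \<bar>block_sum n k w\<bar>}" for N
  have A_sets: "A N \<in> sets M" for N
  proof -
    have "Measurable.pred M (\<lambda>w. \<exists>k\<in>{n..n + N}. \<epsilon> \<le> \<bar>block_sum n k w\<bar>)"
      by (rule pred_intros_countable_bounded(4)) measurable
    then show ?thesis unfolding A_def by measurable
  qed
  have union: "(\<Union>N. A N) = {w \<in> space M. \<exists>k\<ge>n. \<epsilon> \<le> \<bar>block_sum n k w\<bar>}"
  proof
    show "(\<Union>N. A N) \<subseteq> {w \<in> space M. \<exists>k\<ge>n. \<epsilon> \<le> \<bar>block_sum n k w\<bar>}" by (auto simp: A_def)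
    show "{w \<in> space M. \<exists>k\<ge>n. \<epsilon> \<le> \<bar>block_sum n k w\<bar>} \<subseteq> (\<Union>N. A N)"
    proof
      fix w assume "w \<in> {w \<in> space M. \<exists>k\<ge>n. \<epsilon> \<le> \<bar>block_sum n k w\<bar>}"
      then obtain k where "w \<in> space M" "k \<ge> n" "\<epsilon> \<le> \<bar>block_sum n k w\<bar>" by blast
      then have "w \<in> A (k - n)" by (auto simp: A_def)
      then show "w \<in> (\<Union>N. A N)" by blast
    qed
  qed
  have "(\<lambda>N. \<epsilon>\<^sup>2 * measure M (A N)) \<longlonglongrightarrow> \<epsilon>\<^sup>2 * measure M (\<Union>N. A N)"
    using A_sets by (intro tendsto_mult_left finite_Lim_measure_incseq) (auto simp: incseq_def A_def)
  moreover have "\<epsilon>\<^sup>2 * measure M (A N) \<le> suminf v - (\<Sum>t<n. v t)" for N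
  proof -
    have "\<epsilon>\<^sup>2 * measure M (A N) \<le> (\<Sum>t\<in>{n..<n + N}. v t)"
      unfolding A_def v_def by (rule kolmogorov_maximal_inequality[OF assms]) simp
    also have "\<dots> = (\<Sum>t<n + N. v t) - (\<Sum>t<n. v t)"
      using sum.atLeastLessThan_concat[of 0 n "n + N" v] by (simp add: atLeast0LessThan)
    also have "(\<Sum>t<n + N. v t) \<le> suminf v"
      using summable_variances by (intro sum_le_suminf) (auto simp: v_def)
    finally show ?thesis by simp
  qed
  ultimately have "\<epsilon>\<^sup>2 * measure M (\<Union>N. A N) \<le> suminf v - (\<Sum>t<n. v t)"
    by (intro LIMSEQ_le_const2) auto
  then show ?thesis unfolding union by (simp add: v_def[abs_def])
qed

lemma AE_block_sums_eventually_small: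
  assumes "0 < \<epsilon>"
  shows "AE w in M. \<exists>n. \<forall>k\<ge>n. \<bar>block_sum n k w\<bar> < \<epsilon>"
proof -
  define v where "v t = (\<integral>w. (d t w)\<^sup>2 \<partial>M)" for t
  define B where "B = {w \<in> space M. \<forall>n. \<exists>k\<ge>n. \<epsilon> \<le> \<bar>block_sum n k w\<bar>}"
  have "B \<in> sets M" unfolding B_def by measurable
  have "\<epsilon>\<^sup>2 * measure M B \<le> suminf v - (\<Sum>t<n. v t)" for n
  proof -
    have "measure M B \<le> measure M {w \<in> space M. \<exists>k\<ge>n. \<epsilon> \<le> \<bar>block_sum n k w\<bar>}"
      by (intro finite_measure_mono) (auto simp: B_def)
    then have "\<epsilon>\<^sup>2 * measure M B \<le> \<epsilon>\<^sup>2 * measure M {w \<in> space M. \<exists>k\<ge>n. \<epsilon> \<le> \<bar>block_sum n k w\<bar>}"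
      by (intro mult_left_mono) auto
    then show ?thesis using measure_exists_large_block_sum_le[OF assms, of n] by (simp add: v_def[abs_def])
  qed
  moreover have "(\<lambda>n. suminf v - (\<Sum>t<n. v t)) \<longlonglongrightarrow> 0"
    using tendsto_diff[OF tendsto_const summable_LIMSEQ[OF summable_variances], of "suminf v"]
    by (simp add: v_def[abs_def])
  ultimately have "\<epsilon>\<^sup>2 * measure M B \<le> 0" by (intro LIMSEQ_le_const) auto
  then have "measure M B = 0" using assms by (simp add: mult_le_0_iff measure_le_0_iff)
  then show ?thesis
    using \<open>B \<in> sets M\<close> by (intro AE_I[of _ _ B]) (auto simp: B_def emeasure_eq_measure not_less)
qed

lemma summable_AE: "AE w in M. summable (\<lambda>t. d t w)"
proof -
  have "AE w in M. \<forall>j::nat. \<exists>n. \<forall>k\<ge>n. \<bar>block_sum n k w\<bar> < 1 / Suc j"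
    by (subst AE_all_countable) (simp add: AE_block_sums_eventually_small)
  then show ?thesis
  proof eventually_elim
    case (elim w)
    show ?case unfolding summable_Cauchy
    proof (intro allI impI)
      fix e :: real assume "0 < e"
      then obtain j :: nat where j: "1 / Suc j < e / 2"
        by (metis half_gt_zero inverse_eq_divide of_nat_Suc reals_Archimedean)
      obtain n where n: "\<And>k. k \<ge> n \<Longrightarrow> \<bar>block_sum n k w\<bar> < 1 / Suc j" using elim by blast
      have "norm (\<Sum>t\<in>{m..<k}. d t w) < e" if "n \<le> m" for m k
      proof (cases "m \<le> k")
        case True
        then have "(\<Sum>t\<in>{m..<k}. d t w) = block_sum n k w - block_sum n m w"
          using block_sum_diff[OF that True, of w] by simp
        then show ?thesis using n[of k] n[of m] that True j by simp
      qed (use \<open>0 < e\<close> in simp)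
      then show "\<exists>N. \<forall>m\<ge>N. \<forall>k. norm (\<Sum>t\<in>{m..<k}. d t w) < e" by blast
    qed
  qed
qed

end

section \<open>The sampled iteration\<close>

locale expectile_td = expectile_mdp P \<pi> \<alpha> \<gamma> + filtered_prob_space M F
  for P :: "'s::finite \<Rightarrow> 'a::finite \<Rightarrow> (real \<times> 's) measure" and \<pi> \<alpha> \<gamma>
    and M :: "'w measure" and F +
  fixes R :: "nat \<Rightarrow> 's \<Rightarrow> 'a \<Rightarrow> 'w \<Rightarrow> real"
    and S' :: "nat \<Rightarrow> 's \<Rightarrow> 'a \<Rightarrow> 'w \<Rightarrow> 's"
    and \<zeta> :: "nat \<Rightarrow> 'w \<Rightarrow> 's \<Rightarrow> 'a \<Rightarrow> real"
    and Q :: "nat \<Rightarrow> 'w \<Rightarrow> 's \<Rightarrow> 'a \<Rightarrow> real"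
  assumes sample_measurable: "\<And>t s a. (\<lambda>w. (R t s a w, S' t s a w))
      \<in> measurable (F (Suc t)) (borel \<Otimes>\<^sub>M count_space UNIV)"
    and sample_law: "\<And>t s a A B. A \<in> sets (F t) \<Longrightarrow> B \<in> sets (borel \<Otimes>\<^sub>M count_space UNIV) \<Longrightarrow>
      measure M (A \<inter> {w \<in> space M. (R t s a w, S' t s a w) \<in> B}) = measure M A * measure (P s a) B"
    and Q0_measurable: "\<And>s a. (\<lambda>w. Q 0 w s a) \<in> borel_measurable (F 0)"
    and zeta_measurable: "\<And>t s a. (\<lambda>w. \<zeta> t w s a) \<in> borel_measurable (F t)"
    and zeta_nonneg: "\<And>t w s a. 0 \<le> \<zeta> t w s a"
    and update: "\<And>t w s a. Q (Suc t) w s a = Q t w s a + 2 * \<zeta> t w s a *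
      ((1 - \<alpha>) * negpart (R t s a w + \<gamma> * Vpol \<pi> (Q t w) (S' t s a w) - Q t w s a)
       + \<alpha> * pospart (R t s a w + \<gamma> * Vpol \<pi> (Q t w) (S' t s a w) - Q t w s a))"
begin

abbreviation sample_measure :: "(real \<times> 's) measure" where
  "sample_measure \<equiv> borel \<Otimes>\<^sub>M count_space UNIV"

lemma measurable_Vpol_comp:
  fixes G :: "'b \<Rightarrow> 's \<Rightarrow> 'a \<Rightarrow> real"
  assumes "\<And>s a. (\<lambda>w. G w s a) \<in> borel_measurable N" and "g \<in> N \<rightarrow>\<^sub>M count_space UNIV"
  shows "(\<lambda>w. Vpol \<pi> (G w) (g w)) \<in> borel_measurable N"
proof (rule measurable_compose_countable'[where f = "\<lambda>i w. Vpol \<pi> (G w) i" and I = UNIV])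
  fix i :: 's
  show "(\<lambda>w. Vpol \<pi> (G w) i) \<in> borel_measurable N" unfolding Vpol_def using assms(1) by measurable
qed (use assms(2) in auto)

lemma R_measurable: "(\<lambda>w. R t s a w) \<in> borel_measurable (F (Suc t))"
  using measurable_compose[OF sample_measurable[of t s a] measurable_fst] by simp

lemma S'_measurable: "(\<lambda>w. S' t s a w) \<in> F (Suc t) \<rightarrow>\<^sub>M count_space UNIV"
  using measurable_compose[OF sample_measurable[of t s a] measurable_snd] by simp

lemma Q_measurable: "(\<lambda>w. Q t w s a) \<in> borel_measurable (F t)"
proof (induction t arbitrary: s a)
  case (Suc t)
  have [measurable]: "(\<lambda>w. Q t w s a) \<in> borel_measurable (F (Suc t))" for s a
    by (rule measurable_F_mono[OF _ Suc]) simp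
  have [measurable]: "(\<lambda>w. \<zeta> t w s a) \<in> borel_measurable (F (Suc t))"
    by (rule measurable_F_mono[OF _ zeta_measurable]) simp
  have [measurable]: "(\<lambda>w. R t s a w) \<in> borel_measurable (F (Suc t))" by (rule R_measurable)
  have [measurable]: "(\<lambda>w. Vpol \<pi> (Q t w) (S' t s a w)) \<in> borel_measurable (F (Suc t))"
    by (rule measurable_Vpol_comp[OF _ S'_measurable]) simp
  show ?case unfolding update negpart_def pospart_def by measurable
qed (rule Q0_measurable)

definition past :: "nat \<Rightarrow> 'w measure" where
  "past t = restr_to_subalg M (F t)"

lemma sets_past: "sets (past t) = sets (F t)"
  unfolding past_def by (rule sets_restr_to_subalg[OF subalgebra_F])

lemma prob_space_past: "prob_space (past t)"
  unfolding past_def by (rule prob_space_restr_to_subalg[OF subalgebra_F prob_space_axioms])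

lemma sets_F_into_M: "A \<in> sets (F t) \<Longrightarrow> A \<in> sets M \<and> A \<subseteq> space M"
  using subalgebra_F[of t] sets.sets_into_space by (auto simp: subalgebra_def)

lemma measurable_with_past: "(\<lambda>w. (w, (R t s a w, S' t s a w))) \<in> M \<rightarrow>\<^sub>M past t \<Otimes>\<^sub>M sample_measure"
proof (rule measurable_Pair)
  show "(\<lambda>w. w) \<in> M \<rightarrow>\<^sub>M past t"
    by (rule measurableI) (auto simp: past_def space_restr_to_subalg sets_restr_to_subalg[OF subalgebra_F]
        dest: sets_F_into_M intro: Int_absorb2[THEN ssubst])
  show "(\<lambda>w. (R t s a w, S' t s a w)) \<in> M \<rightarrow>\<^sub>M sample_measure"
    by (rule measurable_F_imp_M[OF sample_measurable])
qed

text \<open>This is where \<open>sample_law\<close>, the independence of the step-\<open>t\<close> sample from the past \<open>F t\<close>,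
  enters.\<close>
lemma distr_with_past:
  "distr M (past t \<Otimes>\<^sub>M sample_measure) (\<lambda>w. (w, (R t s a w, S' t s a w))) = past t \<Otimes>\<^sub>M P s a"
proof (rule pair_measure_eqI[symmetric])
  interpret p: prob_space "P s a" by (rule P_prob)
  show "sigma_finite_measure (past t)" "sigma_finite_measure (P s a)"
    using prob_space_past P_prob by (auto intro: prob_space_imp_sigma_finite)
  show "sets (past t \<Otimes>\<^sub>M P s a) = sets (distr M (past t \<Otimes>\<^sub>M sample_measure) (\<lambda>w. (w, (R t s a w, S' t s a w))))"
    by (simp add: sets_pair_measure_cong[OF refl P_sets])
  fix A B assume A: "A \<in> sets (past t)" and B: "B \<in> sets (P s a)"
  then have AF: "A \<in> sets (F t)" and B': "B \<in> sets sample_measure" by (simp_all add: sets_past P_sets)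
  have "(\<lambda>w. (w, (R t s a w, S' t s a w))) -` (A \<times> B) \<inter> space M
      = A \<inter> {w \<in> space M. (R t s a w, S' t s a w) \<in> B}" using sets_F_into_M[OF AF] by auto
  then have "emeasure (distr M (past t \<Otimes>\<^sub>M sample_measure) (\<lambda>w. (w, (R t s a w, S' t s a w)))) (A \<times> B)
      = ennreal (measure M A * measure (P s a) B)"
    using A B' sample_law[OF AF B'] by (simp add: emeasure_distr[OF measurable_with_past] emeasure_eq_measure)
  also have "\<dots> = emeasure (past t) A * emeasure (P s a) B"
    using emeasure_restr_to_subalg[OF subalgebra_F AF]
    by (simp add: past_def ennreal_mult emeasure_eq_measure p.emeasure_eq_measure)
  finally show "emeasure (past t) A * emeasure (P s a) B
      = emeasure (distr M (past t \<Otimes>\<^sub>M sample_measure) (\<lambda>w. (w, (R t s a w, S' t s a w)))) (A \<times> B)" ..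
qed

lemma integral_with_past:
  fixes f :: "'w \<Rightarrow> real \<times> 's \<Rightarrow> real" and C :: real
  assumes f: "(\<lambda>p. f (fst p) (snd p)) \<in> borel_measurable (F t \<Otimes>\<^sub>M sample_measure)"
    and "\<And>w x. \<bar>f w x\<bar> \<le> C"
  shows "(\<integral>w. f w (R t s a w, S' t s a w) \<partial>M) = (\<integral>w. (\<integral>x. f w x \<partial>P s a) \<partial>M)"
proof -
  interpret p: prob_space "P s a" by (rule P_prob)
  interpret pp: pair_prob_space "past t" "P s a"
    by (intro pair_prob_space.intro pair_sigma_finite.intro prob_space_imp_sigma_finite prob_space_past P_prob
        prob_space_past P_prob)
  have sets_eq: "sets (F t \<Otimes>\<^sub>M sample_measure) = sets (past t \<Otimes>\<^sub>M sample_measure)"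
    "sets (F t \<Otimes>\<^sub>M sample_measure) = sets (past t \<Otimes>\<^sub>M P s a)"
    "sets (F t \<Otimes>\<^sub>M sample_measure) = sets (F t \<Otimes>\<^sub>M P s a)"
    by (auto simp: sets_past P_sets intro!: sets_pair_measure_cong)
  have "(\<integral>w. f w (R t s a w, S' t s a w) \<partial>M)
      = (\<integral>p. f (fst p) (snd p) \<partial>distr M (past t \<Otimes>\<^sub>M sample_measure) (\<lambda>w. (w, (R t s a w, S' t s a w))))"
    using f by (subst integral_distr[OF measurable_with_past]) (simp_all add: measurable_cong_sets[OF sets_eq(1) refl])
  also have "\<dots> = (\<integral>w. (\<integral>x. f w x \<partial>P s a) \<partial>past t)"
  proof -
    have "(\<lambda>p. f (fst p) (snd p)) \<in> borel_measurable (past t \<Otimes>\<^sub>M P s a)"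
      using f unfolding measurable_cong_sets[OF sets_eq(2) refl] .
    then show ?thesis unfolding distr_with_past using assms(2)
      by (subst pp.integral_fst'[symmetric]) (auto intro!: pp.integrable_const_bound[where B = C])
  qed
  also have "\<dots> = (\<integral>w. (\<integral>x. f w x \<partial>P s a) \<partial>M)"
  proof -
    have "(\<lambda>p. f (fst p) (snd p)) \<in> borel_measurable (F t \<Otimes>\<^sub>M P s a)"
      using f unfolding measurable_cong_sets[OF sets_eq(3) refl] .
    then show ?thesis unfolding past_def
      by (intro integral_subalgebra2[OF subalgebra_F] p.borel_measurable_lebesgue_integral)
        (simp add: case_prod_beta')
  qed
  finally show ?thesis .
qed

end

definition clip :: "real \<Rightarrow> real" where
  "clip r = max 0 (min 1 r)"

lemma clip_measurable [measurable]: "clip \<in> borel_measurable borel"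
  unfolding clip_def by measurable

context expectile_mdp
begin

lemma abs_asym_lin_target_le:
  assumes "0 \<le> r" "r \<le> 1"
  shows "\<bar>asym_lin \<alpha> (r + \<gamma> * Vpol \<pi> Q s' - q)\<bar> \<le> 1 + supnorm Q + \<bar>q\<bar>"
proof -
  have "\<bar>\<gamma> * Vpol \<pi> Q s'\<bar> \<le> 1 * supnorm Q"
    unfolding abs_mult using gamma abs_Vpol_le[of Q s'] supnorm_nonneg[of Q] by (intro mult_mono) auto
  then show ?thesis using abs_asym_lin_le[OF alpha_unit, of "r + \<gamma> * Vpol \<pi> Q s' - q"] assms by linarith
qed

lemma clipped_mean_score:
  shows "integrable (P s a) (\<lambda>x. asym_lin \<alpha> (clip (fst x) + \<gamma> * Vpol \<pi> Q (snd x) - q))"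
    and "(\<integral>x. asym_lin \<alpha> (clip (fst x) + \<gamma> * Vpol \<pi> Q (snd x) - q) \<partial>P s a) = mean_score Q s a q"
proof -
  interpret prob_space "P s a" by (rule P_prob)
  have measurable: "(\<lambda>x. asym_lin \<alpha> (clip (fst x) + \<gamma> * Vpol \<pi> Q (snd x) - q)) \<in> borel_measurable (P s a)"
    by (simp add: measurable_cong_sets[OF P_sets refl])
  then show "integrable (P s a) (\<lambda>x. asym_lin \<alpha> (clip (fst x) + \<gamma> * Vpol \<pi> Q (snd x) - q))"
    by (intro integrable_const_bound[where B = "1 + supnorm Q + \<bar>q\<bar>"])
      (auto intro!: abs_asym_lin_target_le simp: clip_def)
  show "(\<integral>x. asym_lin \<alpha> (clip (fst x) + \<gamma> * Vpol \<pi> Q (snd x) - q) \<partial>P s a) = mean_score Q s a q"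
    unfolding mean_score_def
  proof (rule integral_cong_AE[OF measurable])
    show "(\<lambda>x. asym_lin \<alpha> (target Q x - q)) \<in> borel_measurable (P s a)"
      using target_measurable by measurable
    show "AE x in P s a. asym_lin \<alpha> (clip (fst x) + \<gamma> * Vpol \<pi> Q (snd x) - q) = asym_lin \<alpha> (target Q x - q)"
      using reward_range[of s a] by eventually_elim (simp add: clip_def target_def case_prod_beta')
  qed
qed

lemma abs_mean_score_le: "\<bar>mean_score Q s a q\<bar> \<le> 1 + supnorm Q + \<bar>q\<bar>"
proof -
  interpret prob_space "P s a" by (rule P_prob)
  have "\<bar>mean_score Q s a q\<bar> \<le> (\<integral>x. \<bar>asym_lin \<alpha> (clip (fst x) + \<gamma> * Vpol \<pi> Q (snd x) - q)\<bar> \<partial>P s a)"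
    unfolding clipped_mean_score(2)[symmetric] by (rule integral_abs_bound)
  also have "\<dots> \<le> (\<integral>x. 1 + supnorm Q + \<bar>q\<bar> \<partial>P s a)"
    using clipped_mean_score(1) by (intro integral_mono) (auto intro!: abs_asym_lin_target_le simp: clip_def)
  finally show ?thesis by (simp add: prob_space)
qed

end

context expectile_td
begin

lemma mean_score_Q_measurable: "(\<lambda>w. mean_score (Q t w) s a (Q t w s a)) \<in> borel_measurable (F t)"
proof -
  interpret p: prob_space "P s a" by (rule P_prob)
  have [measurable]: "(\<lambda>p. Vpol \<pi> (Q t (fst p)) (snd (snd p))) \<in> borel_measurable (F t \<Otimes>\<^sub>M P s a)"
    using Q_measurable by (intro measurable_Vpol_comp) (auto simp: measurable_cong_sets[OF sets_pair_measure_cong[OF refl P_sets] refl])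
  have [measurable]: "(\<lambda>p. Q t (fst p) s a) \<in> borel_measurable (F t \<Otimes>\<^sub>M P s a)"
    by (rule measurable_fst''[OF Q_measurable])
  have [measurable]: "(\<lambda>p. fst (snd p)) \<in> borel_measurable (F t \<Otimes>\<^sub>M P s a)"
    by (auto simp: measurable_cong_sets[OF sets_pair_measure_cong[OF refl P_sets] refl])
  have "(\<lambda>w. \<integral>x. asym_lin \<alpha> (fst x + \<gamma> * Vpol \<pi> (Q t w) (snd x) - Q t w s a) \<partial>P s a) \<in> borel_measurable (F t)"
    by (rule p.borel_measurable_lebesgue_integral) (simp add: case_prod_beta')
  then show ?thesis by (simp add: mean_score_def target_def case_prod_beta')
qed

text \<open>The centred increment of the update. Clipping the reward changes it only on a null set
  but makes it bounded for every sample.\<close>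
definition noise :: "'s \<Rightarrow> 'a \<Rightarrow> nat \<Rightarrow> 'w \<Rightarrow> real \<times> 's \<Rightarrow> real" where
  "noise s a t w x = asym_lin \<alpha> (clip (fst x) + \<gamma> * Vpol \<pi> (Q t w) (snd x) - Q t w s a)
     - mean_score (Q t w) s a (Q t w s a)"

lemma noise_measurable: "(\<lambda>p. noise s a t (fst p) (snd p)) \<in> borel_measurable (F t \<Otimes>\<^sub>M sample_measure)"
proof -
  have [measurable]: "(\<lambda>p. Vpol \<pi> (Q t (fst p)) (snd (snd p))) \<in> borel_measurable (F t \<Otimes>\<^sub>M sample_measure)"
    using Q_measurable by (intro measurable_Vpol_comp) auto
  have [measurable]: "(\<lambda>p. Q t (fst p) s a) \<in> borel_measurable (F t \<Otimes>\<^sub>M sample_measure)"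
    by (rule measurable_fst''[OF Q_measurable])
  have [measurable]: "(\<lambda>p. mean_score (Q t (fst p)) s a (Q t (fst p) s a)) \<in> borel_measurable (F t \<Otimes>\<^sub>M sample_measure)"
    by (rule measurable_fst''[OF mean_score_Q_measurable])
  show ?thesis unfolding noise_def by measurable
qed

lemma integral_noise_eq_0: "(\<integral>x. noise s a t w x \<partial>P s a) = 0"
proof -
  interpret p: prob_space "P s a" by (rule P_prob)
  show ?thesis unfolding noise_def
    by (simp add: Bochner_Integration.integral_diff[OF clipped_mean_score(1)] clipped_mean_score(2) p.prob_space)
qed

lemma abs_noise_le:
  assumes "supnorm (Q t w) \<le> K"
  shows "\<bar>noise s a t w x\<bar> \<le> 2 * (1 + 2 * K)"
proof -
  let ?g = "asym_lin \<alpha> (clip (fst x) + \<gamma> * Vpol \<pi> (Q t w) (snd x) - Q t w s a)"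
  let ?m = "mean_score (Q t w) s a (Q t w s a)"
  have "\<bar>?g\<bar> \<le> 1 + supnorm (Q t w) + \<bar>Q t w s a\<bar>"
    by (rule abs_asym_lin_target_le) (simp_all add: clip_def)
  moreover have "\<bar>?m\<bar> \<le> 1 + supnorm (Q t w) + \<bar>Q t w s a\<bar>" by (rule abs_mean_score_le)
  ultimately have "\<bar>?g\<bar> + \<bar>?m\<bar> \<le> 2 * (1 + supnorm (Q t w) + \<bar>Q t w s a\<bar>)" by simp
  also have "\<dots> \<le> 2 * (1 + 2 * K)" using abs_le_supnorm[of "Q t w" s a] assms by simp
  finally have "\<bar>?g\<bar> + \<bar>?m\<bar> \<le> 2 * (1 + 2 * K)" .
  then show ?thesis unfolding noise_def using abs_triangle_ineq4[of ?g ?m] by linarith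
qed

text \<open>Stopping the noise once \<open>Q\<close> or the partial sums of \<open>\<zeta>\<^sup>2\<close> exceed \<open>K\<close> turns it into a bounded
  martingale difference sequence with bounded variance; on a path along which \<open>Q\<close> stays
  bounded and \<open>\<zeta>\<close> is square summable, it is never stopped once \<open>K\<close> is large.\<close>
definition localized :: "nat \<Rightarrow> 's \<Rightarrow> 'a \<Rightarrow> nat \<Rightarrow> 'w \<Rightarrow> bool" where
  "localized K s a t w \<longleftrightarrow> (\<forall>u\<le>t. supnorm (Q u w) \<le> K) \<and> (\<Sum>u\<le>t. (\<zeta> u w s a)\<^sup>2) \<le> K"

definition localized_noise :: "nat \<Rightarrow> 's \<Rightarrow> 'a \<Rightarrow> nat \<Rightarrow> 'w \<Rightarrow> real" where
  "localized_noise K s a t w =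
     (if localized K s a t w then \<zeta> t w s a * noise s a t w (R t s a w, S' t s a w) else 0)"

lemma localized_measurable [measurable]: "Measurable.pred (F t) (localized K s a t)"
proof -
  have [measurable]: "Measurable.pred (F t) (\<lambda>w. \<forall>u\<in>{..t}. \<forall>s a. \<bar>Q u w s a\<bar> \<le> real K)"
  proof (rule pred_intros_finite(3))
    fix u assume "u \<in> {..t}"
    then have [measurable]: "(\<lambda>w. Q u w s a) \<in> borel_measurable (F t)" for s a
      by (intro measurable_F_mono[OF _ Q_measurable]) simp
    show "Measurable.pred (F t) (\<lambda>w. \<forall>s a. \<bar>Q u w s a\<bar> \<le> real K)" by measurable
  qed simp
  have [measurable]: "(\<lambda>w. \<Sum>u\<le>t. (\<zeta> u w s a)\<^sup>2) \<in> borel_measurable (F t)"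
    by (intro borel_measurable_sum borel_measurable_power measurable_F_mono[OF _ zeta_measurable]) simp
  have "localized K s a t
      = (\<lambda>w. (\<forall>u\<in>{..t}. \<forall>s a. \<bar>Q u w s a\<bar> \<le> real K) \<and> (\<Sum>u\<le>t. (\<zeta> u w s a)\<^sup>2) \<le> real K)"
    by (auto simp: fun_eq_iff localized_def supnorm_le_iff)
  then show ?thesis by (simp only:) measurable
qed

lemma zeta_le_if_localized: "localized K s a t w \<Longrightarrow> \<zeta> t w s a \<le> 1 + real K"
proof -
  assume "localized K s a t w"
  then have "(\<zeta> t w s a)\<^sup>2 \<le> K"
    unfolding localized_def using member_le_sum[of t "{..t}" "\<lambda>u. (\<zeta> u w s a)\<^sup>2"] by force
  moreover have "\<zeta> t w s a \<le> 1 + (\<zeta> t w s a)\<^sup>2"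
    using zero_le_power2[of "\<zeta> t w s a - 1 / 2"] by (simp add: power2_eq_square algebra_simps)
  ultimately show ?thesis by linarith
qed

lemma abs_localized_noise_le:
  "\<bar>localized_noise K s a t w\<bar> \<le> (1 + real K) * (2 * (1 + 2 * real K))"
proof (cases "localized K s a t w")
  case True
  then have "\<zeta> t w s a \<le> 1 + real K" "\<bar>noise s a t w (R t s a w, S' t s a w)\<bar> \<le> 2 * (1 + 2 * real K)"
    using zeta_le_if_localized abs_noise_le by (auto simp: localized_def)
  then have "\<zeta> t w s a * \<bar>noise s a t w (R t s a w, S' t s a w)\<bar> \<le> (1 + real K) * (2 * (1 + 2 * real K))"
    using zeta_nonneg[of t w s a] by (intro mult_mono) auto
  then show ?thesis using True zeta_nonneg[of t w s a] by (simp add: localized_noise_def abs_mult)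
qed (simp add: localized_noise_def)

lemma localized_noise_measurable: "localized_noise K s a t \<in> borel_measurable (F (Suc t))"
proof -
  have [measurable]: "(\<lambda>w. Q t w s a) \<in> borel_measurable (F (Suc t))" for s a
    by (rule measurable_F_mono[OF _ Q_measurable]) simp
  have [measurable]: "(\<lambda>w. R t s a w) \<in> borel_measurable (F (Suc t))" by (rule R_measurable)
  have [measurable]: "(\<lambda>w. Vpol \<pi> (Q t w) (S' t s a w)) \<in> borel_measurable (F (Suc t))"
    by (rule measurable_Vpol_comp[OF _ S'_measurable]) simp
  have [measurable]: "(\<lambda>w. mean_score (Q t w) s a (Q t w s a)) \<in> borel_measurable (F (Suc t))"
    by (rule measurable_F_mono[OF _ mean_score_Q_measurable]) simp
  have [measurable]: "(\<lambda>w. \<zeta> t w s a) \<in> borel_measurable (F (Suc t))"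
    by (rule measurable_F_mono[OF _ zeta_measurable]) simp
  have [measurable]: "Measurable.pred (F (Suc t)) (localized K s a t)"
    by (rule measurable_F_mono[OF _ localized_measurable]) simp
  have [measurable]: "(\<lambda>w. noise s a t w (R t s a w, S' t s a w)) \<in> borel_measurable (F (Suc t))"
    unfolding noise_def fst_conv snd_conv by measurable
  show ?thesis unfolding localized_noise_def by measurable
qed

lemma sum_square_localized_noise_le:
  "(\<Sum>t<N. (localized_noise K s a t w)\<^sup>2) \<le> (2 * (1 + 2 * real K))\<^sup>2 * real K"
proof -
  define A where "A N = (\<Sum>t<N. if localized K s a t w then (\<zeta> t w s a)\<^sup>2 else 0)" for N
  have "A N \<le> real K" for N
  proof (induction N)
    case (Suc N)
    show ?case
    proof (cases "localized K s a N w")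
      case True
      have "A N \<le> (\<Sum>t<N. (\<zeta> t w s a)\<^sup>2)" unfolding A_def by (rule sum_mono) auto
      then have "A (Suc N) \<le> (\<Sum>t\<le>N. (\<zeta> t w s a)\<^sup>2)" using True by (simp add: A_def lessThan_Suc_atMost[symmetric])
      then show ?thesis using True by (simp add: localized_def)
    qed (use Suc in \<open>simp add: A_def\<close>)
  qed (simp add: A_def)
  moreover have "(localized_noise K s a t w)\<^sup>2
      \<le> (2 * (1 + 2 * real K))\<^sup>2 * (if localized K s a t w then (\<zeta> t w s a)\<^sup>2 else 0)" for t
  proof (cases "localized K s a t w")
    case True
    then have "(noise s a t w (R t s a w, S' t s a w))\<^sup>2 \<le> (2 * (1 + 2 * real K))\<^sup>2"
      using abs_noise_le[of t w "real K"] by (simp add: localized_def abs_le_square_iff[symmetric])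
    then show ?thesis using True
      by (simp add: localized_noise_def power_mult_distrib mult.commute mult_left_mono)
  qed (simp add: localized_noise_def)
  then have "(\<Sum>t<N. (localized_noise K s a t w)\<^sup>2) \<le> (2 * (1 + 2 * real K))\<^sup>2 * A N"
    unfolding A_def sum_distrib_left by (rule sum_mono)
  ultimately show ?thesis by (meson mult_left_mono order_trans zero_le_power2)
qed

lemma integral_mult_localized_noise_eq_0:
  assumes "Z \<in> borel_measurable (F t)" "\<And>w. \<bar>Z w\<bar> \<le> B"
  shows "(\<integral>w. Z w * localized_noise K s a t w \<partial>M) = 0"
proof -
  define f where "f w x = Z w * (if localized K s a t w then \<zeta> t w s a * noise s a t w x else 0)" for w x
  have f_measurable: "(\<lambda>p. f (fst p) (snd p)) \<in> borel_measurable (F t \<Otimes>\<^sub>M sample_measure)"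
  proof -
    have [measurable]: "(\<lambda>p. noise s a t (fst p) (snd p)) \<in> borel_measurable (F t \<Otimes>\<^sub>M sample_measure)"
      by (rule noise_measurable)
    have [measurable]: "(\<lambda>w. \<zeta> t w s a) \<in> borel_measurable (F t)" by (rule zeta_measurable)
    have [measurable]: "Z \<in> borel_measurable (F t)" by (rule assms(1))
    show ?thesis unfolding f_def by measurable
  qed
  have f_bounded: "\<bar>f w x\<bar> \<le> B * ((1 + real K) * (2 * (1 + 2 * real K)))" for w x
  proof (cases "localized K s a t w")
    case True
    then have "\<zeta> t w s a * \<bar>noise s a t w x\<bar> \<le> (1 + real K) * (2 * (1 + 2 * real K))"
      using zeta_le_if_localized zeta_nonneg[of t w s a] abs_noise_le[of t w "real K"]
      by (intro mult_mono) (auto simp: localized_def)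
    moreover have "\<bar>f w x\<bar> = \<bar>Z w\<bar> * (\<zeta> t w s a * \<bar>noise s a t w x\<bar>)"
      using True zeta_nonneg[of t w s a] by (simp add: f_def abs_mult)
    moreover have "0 \<le> \<zeta> t w s a * \<bar>noise s a t w x\<bar>" using zeta_nonneg[of t w s a] by simp
    ultimately show ?thesis
      using mult_mono[OF assms(2)[of w]] order_trans[OF abs_ge_zero assms(2)[of w]] by simp
  qed (use assms(2)[of w] in \<open>simp add: f_def order_trans[OF abs_ge_zero]\<close>)
  have "(\<integral>w. f w (R t s a w, S' t s a w) \<partial>M) = (\<integral>w. (\<integral>x. f w x \<partial>P s a) \<partial>M)"
    using f_measurable f_bounded by (rule integral_with_past)
  moreover have "(\<integral>x. f w x \<partial>P s a) = 0" for w
    by (cases "localized K s a t w") (simp_all add: f_def integral_noise_eq_0)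
  moreover have "(\<integral>w. Z w * localized_noise K s a t w \<partial>M) = (\<integral>w. f w (R t s a w, S' t s a w) \<partial>M)"
    by (simp add: f_def localized_noise_def)
  ultimately show ?thesis by simp
qed

lemma bounded_martingale_diff_localized_noise:
  "bounded_martingale_diff M F (localized_noise K s a)
     ((1 + real K) * (2 * (1 + 2 * real K))) ((2 * (1 + 2 * real K))\<^sup>2 * real K)"
proof unfold_locales
  show "(\<Sum>t<N. \<integral>w. (localized_noise K s a t w)\<^sup>2 \<partial>M) \<le> (2 * (1 + 2 * real K))\<^sup>2 * real K" for N
  proof -
    have integrable: "integrable M (\<lambda>w. (localized_noise K s a t w)\<^sup>2)" for t
      using measurable_F_imp_M[OF localized_noise_measurable] abs_localized_noise_le
      by (intro integrable_const_bound[where B = "((1 + real K) * (2 * (1 + 2 * real K)))\<^sup>2"])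
        (auto simp: abs_le_square_iff[symmetric])
    have "(\<Sum>t<N. \<integral>w. (localized_noise K s a t w)\<^sup>2 \<partial>M) = (\<integral>w. (\<Sum>t<N. (localized_noise K s a t w)\<^sup>2) \<partial>M)"
      using integrable by (simp add: Bochner_Integration.integral_sum)
    also have "\<dots> \<le> (\<integral>w. (2 * (1 + 2 * real K))\<^sup>2 * real K \<partial>M)"
      using integrable sum_square_localized_noise_le by (intro integral_mono) auto
    finally show ?thesis by (simp add: prob_space)
  qed
  show "\<bar>localized_noise K s a t w\<bar> \<le> (1 + real K) * (2 * (1 + 2 * real K))" for t w
    by (rule abs_localized_noise_le)
qed (auto intro: localized_noise_measurable integral_mult_localized_noise_eq_0)

lemma localized_noise_summable_AE: "AE w in M. \<forall>K s a. summable (\<lambda>t. localized_noise K s a t w)"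
proof -
  have "AE w in M. \<forall>s a. summable (\<lambda>t. localized_noise K s a t w)" for K
    using bounded_martingale_diff.summable_AE[OF bounded_martingale_diff_localized_noise]
    by (intro eventually_all_finite)
  then show ?thesis by (subst AE_all_countable) auto
qed

lemma reward_unit_interval_AE: "AE w in M. \<forall>t s a. 0 \<le> R t s a w \<and> R t s a w \<le> 1"
proof -
  have "AE w in M. 0 \<le> R t s a w \<and> R t s a w \<le> 1" for t s a
  proof -
    interpret p: prob_space "P s a" by (rule P_prob)
    define bad where "bad = {x \<in> space sample_measure. \<not> (0 \<le> fst x \<and> fst x \<le> 1)}"
    define E where "E = {w \<in> space M. (R t s a w, S' t s a w) \<in> bad}"
    have "bad \<in> sets sample_measure" unfolding bad_def by measurable
    then have "E \<in> sets M"
      using measurable_sets[OF measurable_F_imp_M[OF sample_measurable]] by (simp add: E_def vimage_def Int_def conj_commute)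
    have "space M \<in> sets (F t)" using sets.top[of "F t"] by (simp add: space_F)
    then have "measure M E = measure (P s a) bad"
      using sample_law[of "space M" t bad s a] \<open>bad \<in> sets sample_measure\<close>
      by (simp add: E_def Collect_conj_eq Int_absorb1 prob_space)
    also have "\<dots> = 0"
    proof -
      have "AE x in P s a. x \<notin> bad" using reward_range[of s a] by eventually_elim (simp add: bad_def)
      then show ?thesis using \<open>bad \<in> sets sample_measure\<close> P_sets[of s a] by (simp add: p.prob_eq_0)
    qed
    finally have "E \<in> null_sets M" using \<open>E \<in> sets M\<close> by (intro null_setsI) (simp_all add: emeasure_eq_measure)
    then have "AE w in M. (R t s a w, S' t s a w) \<notin> bad" by (rule AE_I') (auto simp: E_def)
    then show ?thesis by eventually_elim (auto simp: bad_def space_pair_measure)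
  qed
  then have "AE w in M. \<forall>s a. 0 \<le> R t s a w \<and> R t s a w \<le> 1" for t
    by (intro eventually_all_finite)
  then show ?thesis by (simp add: AE_all_countable)
qed

lemma localized_forever:
  assumes "\<And>t. supnorm (Q t w) \<le> B" "\<And>s a. summable (\<lambda>t. (\<zeta> t w s a)\<^sup>2)"
  obtains K where "\<And>s a t. localized K s a t w"
proof -
  have large: "eventually (\<lambda>K. c \<le> real K) sequentially" for c :: real
    using filterlim_real_sequentially by (simp add: filterlim_at_top)
  have "eventually (\<lambda>K. \<forall>s a. B \<le> real K \<and> (\<Sum>t. (\<zeta> t w s a)\<^sup>2) \<le> real K) sequentially"
    using large by (intro eventually_all_finite eventually_conj)
  then obtain K where K: "\<And>s a. B \<le> real K \<and> (\<Sum>t. (\<zeta> t w s a)\<^sup>2) \<le> real K"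
    by (auto simp: eventually_sequentially)
  have "localized K s a t w" for s a t
  proof -
    have "supnorm (Q u w) \<le> real K" for u using assms(1)[of u] K[of s a] by linarith
    moreover have "(\<Sum>u\<le>t. (\<zeta> u w s a)\<^sup>2) \<le> (\<Sum>u. (\<zeta> u w s a)\<^sup>2)"
      by (rule sum_le_suminf[OF assms(2)]) auto
    ultimately show ?thesis using K[of s a] unfolding localized_def by simp
  qed
  then show ?thesis by (rule that)
qed

lemma AE_tendsto_Qpi:
  assumes "AE w in M. \<forall>s a. \<not> summable (\<lambda>t. \<zeta> t w s a) \<and> summable (\<lambda>t. (\<zeta> t w s a)\<^sup>2)"
  shows "AE w in M. \<forall>s a. (\<lambda>t. Q t w s a) \<longlonglongrightarrow> Qpi \<alpha> \<gamma> P \<pi> s a"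
  using assms reward_unit_interval_AE localized_noise_summable_AE
proof eventually_elim
  case (elim w)
  have \<zeta>_tendsto: "(\<lambda>t. \<zeta> t w s a) \<longlonglongrightarrow> 0" for s a
    using tendsto_real_sqrt[OF summable_LIMSEQ_zero[of "\<lambda>t. (\<zeta> t w s a)\<^sup>2"]] elim(1) zeta_nonneg by simp
  have rec: "Q (Suc t) w s a = Q t w s a
      + 2 * \<zeta> t w s a * asym_lin \<alpha> (R t s a w + \<gamma> * Vpol \<pi> (Q t w) (S' t s a w) - Q t w s a)" for t s a
    unfolding asym_lin_def by (rule update)
  have reward: "0 \<le> R t s a w \<and> R t s a w \<le> 1" for t s a using elim(2) by blast
  have "\<exists>B. \<forall>t. supnorm (Q t w) \<le> B"
    by (rule asym_lin_iteration_bounded[where q = "\<lambda>t. Q t w" and s' = "\<lambda>t s a. S' t s a w",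
          OF rec reward zeta_nonneg \<zeta>_tendsto])
  then obtain B where B: "\<And>t. supnorm (Q t w) \<le> B" by blast
  have "summable (\<lambda>t. (\<zeta> t w s a)\<^sup>2)" for s a using elim(1) by blast
  then obtain K where K: "\<And>s a t. localized K s a t w" by (rule localized_forever[OF B]) blast
  define W where "W t s a = noise s a t w (R t s a w, S' t s a w)" for t s a
  show ?case
  proof (intro allI perturbed_bellman_iteration_tendsto[OF B])
    show "Q (Suc t) w s a = Q t w s a + 2 * \<zeta> t w s a * (mean_score (Q t w) s a (Q t w s a) + W t s a)"
      for t s a
    proof -
      have "clip (R t s a w) = R t s a w" using reward[of t s a] by (simp add: clip_def)
      then show ?thesis using rec[of t s a] by (simp add: W_def noise_def)
    qed
    show "summable (\<lambda>t. \<zeta> t w s a * W t s a)" for s a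
    proof -
      have "summable (\<lambda>t. localized_noise K s a t w)" using elim(3) by blast
      then show ?thesis using K by (simp add: localized_noise_def W_def)
    qed
    show "0 \<le> \<zeta> t w s a" for t s a by (rule zeta_nonneg)
    show "(\<lambda>t. \<zeta> t w s a) \<longlonglongrightarrow> 0" for s a by (rule \<zeta>_tendsto)
    show "\<not> summable (\<lambda>t. \<zeta> t w s a)" for s a using elim(1) by blast
  qed
qed

end

theorem proposition1:
  fixes M :: "'w measure"
    and F :: "nat \<Rightarrow> 'w measure"
    and P :: "'s::finite \<Rightarrow> 'a::finite \<Rightarrow> (real \<times> 's) measure"
    and \<pi> :: "'s \<Rightarrow> 'a \<Rightarrow> real"
    and \<alpha> \<gamma> :: real
    and R :: "nat \<Rightarrow> 's \<Rightarrow> 'a \<Rightarrow> 'w \<Rightarrow> real"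
    and S' :: "nat \<Rightarrow> 's \<Rightarrow> 'a \<Rightarrow> 'w \<Rightarrow> 's"
    and \<zeta> :: "nat \<Rightarrow> 'w \<Rightarrow> 's \<Rightarrow> 'a \<Rightarrow> real"
    and Q :: "nat \<Rightarrow> 'w \<Rightarrow> 's \<Rightarrow> 'a \<Rightarrow> real"
  assumes gamma: "0 < \<gamma>" "\<gamma> < 1"
    and alpha: "0 < \<alpha>" "\<alpha> < 1"
    and policy: "\<And>s a. 0 \<le> \<pi> s a" "\<And>s. (\<Sum>a\<in>UNIV. \<pi> s a) = 1"
    and P_prob: "\<And>s a. prob_space (P s a)"
    and P_sets: "\<And>s a. sets (P s a) = sets (borel \<Otimes>\<^sub>M count_space UNIV)"
    and reward_range: "\<And>s a. AE x in P s a. 0 \<le> fst x \<and> fst x \<le> 1"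
    and reward_density: "\<And>s a. \<exists>f B. f \<in> borel_measurable borel \<and> (\<forall>x. 0 \<le> f x \<and> f x \<le> B)
           \<and> distr (P s a) lborel fst = density lborel (\<lambda>x. ennreal (f x))"
    and M_prob: "prob_space M"
    and F_sub: "\<And>t. subalgebra M (F t)"
    and F_mono: "\<And>t. sets (F t) \<subseteq> sets (F (Suc t))"
    and sample_meas: "\<And>t s a. (\<lambda>w. (R t s a w, S' t s a w))
           \<in> measurable (F (Suc t)) (borel \<Otimes>\<^sub>M count_space UNIV)"
    and sample_law: "\<And>t s a A B. A \<in> sets (F t) \<Longrightarrow> B \<in> sets (borel \<Otimes>\<^sub>M count_space UNIV) \<Longrightarrow>
           measure M (A \<inter> {w \<in> space M. (R t s a w, S' t s a w) \<in> B})
             = measure M A * measure (P s a) B"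
    and Q0_meas: "\<And>s a. (\<lambda>w. Q 0 w s a) \<in> borel_measurable (F 0)"
    and zeta_meas: "\<And>t s a. (\<lambda>w. \<zeta> t w s a) \<in> borel_measurable (F t)"
    and zeta_nonneg: "\<And>t w s a. 0 \<le> \<zeta> t w s a"
    and zeta_sum: "AE w in M. \<forall>s a. \<not> summable (\<lambda>t. \<zeta> t w s a) \<and> summable (\<lambda>t. (\<zeta> t w s a)\<^sup>2)"
    and update: "\<And>t w s a. Q (Suc t) w s a = Q t w s a + 2 * \<zeta> t w s a *
           ((1 - \<alpha>) * negpart (R t s a w + \<gamma> * Vpol \<pi> (Q t w) (S' t s a w) - Q t w s a)
            + \<alpha> * pospart (R t s a w + \<gamma> * Vpol \<pi> (Q t w) (S' t s a w) - Q t w s a))"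
  shows "AE w in M. \<forall>s a. (\<lambda>t. Q t w s a) \<longlonglongrightarrow> Qpi \<alpha> \<gamma> P \<pi> s a"
proof -
  have mdp: "expectile_mdp P \<pi> \<alpha> \<gamma>"
    by (rule expectile_mdp.intro) (fact gamma alpha policy P_prob P_sets reward_range)+
  have filtered: "filtered_prob_space M F"
  proof (intro filtered_prob_space.intro filtration.intro filtered_prob_space_axioms.intro)
    show "space (F t) = space M" "sets (F t) \<subseteq> sets M" for t
      using F_sub[of t] by (simp_all add: subalgebra_def)
    show "sets (F t) \<subseteq> sets (F u)" if "t \<le> u" for t u
      using that by (induction u rule: dec_induct) (use F_mono in blast)+
  qed (fact M_prob)
  interpret expectile_td P \<pi> \<alpha> \<gamma> M F R S' \<zeta> Q
    by (rule expectile_td.intro[OF mdp filtered expectile_td_axioms.intro])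
      (fact sample_meas sample_law Q0_meas zeta_meas zeta_nonneg update)+
  show ?thesis by (rule AE_tendsto_Qpi[OF zeta_sum])
qed

end
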